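(* For each $n$ let $\boldsymbol{d}_n\in\mathbb{N}^n$ be a degree vector (all entries $\ge1$, sum even) and let $G_n=\mathrm{CM}_n(\boldsymbol{d}_n)$ be the undirected configuration model. Let $\phi_n$ be a uniformly chosen vertex of $[n]$ and $D_n=d_{\phi_n}$. Assume $D_n\to D$ in distribution and $\mathbb{E}[D_n]\to\mathbb{E}[D]<\infty$. Let $c\in(0,1)$ and let $\boldsymbol{R}^{(G_n)}$ be the PageRank vector of $G_n$ with damping factor $c$. Then for all $n,k$, $$\mathbb{P}(R^{(G_n)}_{\phi_n}>k)\le\mathbb{P}(D_n>k),$$ and for any $\beta>\frac{4\mathbb{E}[D]}{c(1-c)}$, $$\liminf_{k\to\infty}\liminf_{n\to\infty}\frac{\mathbb{P}(R^{(G_n)}_{\phi_n}>k)}{\mathbb{P}(D_n>\beta k)}\ge1.$$ Moreover, if $D$ has a power-law distribution with exponent $\tau>1$ and tail function $\mathcal{L}$, then there is $0<\underline a\le1$ such that the limiting root-PageRank $R_\phi$ satisfies $$\underline a\,\mathcal{L}(k)k^{-(\tau-1)}\le\mathbb{P}(R_\phi>k)\le\mathcal{L}(k)k^{-(\tau-1)}\qquad\text{for every }k\in(0,\infty).$$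
   Context: $\mathrm{CM}_n(\boldsymbol{d})$: vertex $i\in[n]$ receives $d_i$ half-edges; a uniformly random perfect matching of all $|\boldsymbol{d}|=\sum_id_i$ half-edges (via a uniform permutation) is formed and matched half-edges become edges. PageRank on a finite graph: with $p_{ij}=a_{ij}/d_i$ ($a_{ij}$ the adjacency entries), $\boldsymbol{R}$ is the unique solution of $\boldsymbol{R}=c\boldsymbol{R}\boldsymbol{P}+(1-c)\boldsymbol{1}_n$, i.e. $R_k=(1-c)\sum_{s\ge0}c^s\sum_j(\boldsymbol{P}^s)_{jk}$. Probabilities are over both the random graph and the uniform root. The limiting root-PageRank $R_\phi$ is the root-PageRank $R_\phi=(1-c)\sum_{s\ge0}c^s\sum_j(\boldsymbol{P}^s)_{j\phi}$ of the unimodular branching-process tree with root-degree distribution $p_k=\mathbb{P}(D=k)$ (the root has $D$ children, every other vertex has an independent number of children with law $p^*_k=(k+1)p_{k+1}/\mathbb{E}[D]$), which is the local weak limit of $G_n$; equivalently $R_\phi$ is the distributional limit of $R^{(G_n)}_{\phi_n}$. A function $\mathcal{L}:(0,\infty)\to(0,\infty)$ is slowly varying if $\mathcal{L}(ax)/\mathcal{L}(x)\to1$ as $x\to\infty$ for every $a>0$; $X$ has a power-law distribution with exponent $\tau>1$ and tail function $\mathcal{L}$ if $\mathcal{L}$ is slowly varying and $\mathbb{P}(X>x)=\mathcal{L}(x)x^{-(\tau-1)}$ for all $x>0$. *)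

theory Defs
  imports "HOL-Probability.Probability"
begin

text \<open>A degree vector for n vertices is a function dv :: nat => nat, read on {..<n}.
  Half-edges are numbered 0 ..< sum dv {..<n}; vertex i owns the block below.\<close>

definition half_edges :: "(nat \<Rightarrow> nat) \<Rightarrow> nat \<Rightarrow> nat set" where
  "half_edges dv i = {sum dv {..<i} ..< sum dv {..<Suc i}}"

definition matchings :: "(nat \<Rightarrow> nat) \<Rightarrow> nat \<Rightarrow> (nat \<Rightarrow> nat) set" where
  "matchings dv n = {m. m permutes {..<sum dv {..<n}} \<and>
      (\<forall>h < sum dv {..<n}. m h \<noteq> h \<and> m (m h) = h)}"

text \<open>Adjacency entry a_ij: number of half-edges of i matched to half-edges of j
  (a self-loop counts twice in a_ii, so rows sum to the degrees).\<close>
definition cm_adj :: "(nat \<Rightarrow> nat) \<Rightarrow> (nat \<Rightarrow> nat) \<Rightarrow> nat \<Rightarrow> nat \<Rightarrow> nat" where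
  "cm_adj dv m i j = card {h \<in> half_edges dv i. m h \<in> half_edges dv j}"

text \<open>col_sum dv n m s k = sum_j (P^s)_{jk}, with p_ij = a_ij / d_i.\<close>
primrec col_sum :: "(nat \<Rightarrow> nat) \<Rightarrow> nat \<Rightarrow> (nat \<Rightarrow> nat) \<Rightarrow> nat \<Rightarrow> nat \<Rightarrow> real" where
  "col_sum dv n m 0 k = 1"
| "col_sum dv n m (Suc s) k =
     (\<Sum>j<n. col_sum dv n m s j * real (cm_adj dv m j k) / real (dv j))"

definition pagerank :: "real \<Rightarrow> (nat \<Rightarrow> nat) \<Rightarrow> nat \<Rightarrow> (nat \<Rightarrow> nat) \<Rightarrow> nat \<Rightarrow> real" where
  "pagerank c dv n m k = (1 - c) * (\<Sum>s. c ^ s * col_sum dv n m s k)"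

definition cm_root :: "(nat \<Rightarrow> nat) \<Rightarrow> nat \<Rightarrow> ((nat \<Rightarrow> nat) \<times> nat) pmf" where
  "cm_root dv n = pair_pmf (pmf_of_set (matchings dv n)) (pmf_of_set {..<n})"

definition prob_root_pr_gt :: "real \<Rightarrow> (nat \<Rightarrow> nat) \<Rightarrow> nat \<Rightarrow> real \<Rightarrow> real" where
  "prob_root_pr_gt c dv n k =
     measure_pmf.prob (cm_root dv n) {(m, i). pagerank c dv n m i > k}"

definition deg_law :: "(nat \<Rightarrow> nat) \<Rightarrow> nat \<Rightarrow> nat pmf" where
  "deg_law dv n = map_pmf dv (pmf_of_set {..<n})"

text \<open>Vertices are lists of naturals; N v = number of children of v; the vertices of the tree
  are those v = [i1,...,ik] with each index below N of the corresponding prefix. Children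
  of v: v @ [i], i < N v; parent of v \<noteq> []: butlast v.\<close>

definition tree_deg :: "(nat list \<Rightarrow> nat) \<Rightarrow> nat list \<Rightarrow> nat" where
  "tree_deg N v = N v + (if v = [] then 0 else 1)"

text \<open>tree_col_sum N s v = sum_j (P^s)_{jv} on the tree.\<close>
primrec tree_col_sum :: "(nat list \<Rightarrow> nat) \<Rightarrow> nat \<Rightarrow> nat list \<Rightarrow> real" where
  "tree_col_sum N 0 v = 1"
| "tree_col_sum N (Suc s) v =
     (\<Sum>i<N v. tree_col_sum N s (v @ [i]) / real (tree_deg N (v @ [i])))
     + (if v = [] then 0
        else tree_col_sum N s (butlast v) / real (tree_deg N (butlast v)))"

text \<open>Root PageRank of the tree (as extended nonnegative real, so it is always defined).\<close>
definition tree_root_pr :: "real \<Rightarrow> (nat list \<Rightarrow> nat) \<Rightarrow> ennreal" where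
  "tree_root_pr c N = (\<Sum>s. ennreal ((1 - c) * c ^ s * tree_col_sum N s []))"

definition size_biased :: "nat pmf \<Rightarrow> nat pmf" where
  "size_biased p = embed_pmf (\<lambda>k. real (Suc k) * pmf p (Suc k) / measure_pmf.expectation p real)"

definition ubp_tree :: "nat pmf \<Rightarrow> (nat list \<Rightarrow> nat) measure" where
  "ubp_tree p = (\<Pi>\<^sub>M v\<in>UNIV. measure_pmf (if v = [] then p else size_biased p))"

definition prob_limit_pr_gt :: "real \<Rightarrow> nat pmf \<Rightarrow> real \<Rightarrow> real" where
  "prob_limit_pr_gt c p k =
     measure (ubp_tree p) {N \<in> space (ubp_tree p). tree_root_pr c N > ennreal k}"

definition slowly_varying :: "(real \<Rightarrow> real) \<Rightarrow> bool" where
  "slowly_varying L \<longleftrightarrow> (\<forall>x>0. L x > 0) \<and>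
     (\<forall>a>0. ((\<lambda>x. L (a * x) / L x) \<longlongrightarrow> 1) at_top)"

end

theory Submission
  imports Defs "HOL-Real_Asymp.Real_Asymp"
begin

text \<open>
  Upper bound: the column sums of \<open>P\<^sup>s\<close> never exceed the degree, because the adjacency matrix
  of the configuration model is symmetric, so \<open>R\<^sub>v \<le> d\<^sub>v\<close> for every graph.

  Lower bound: \<open>R\<^sub>v \<ge> c (1 - c) X\<^sub>v\<close>, where \<open>X\<^sub>v = \<Sum> 1 / d\<^sub>j\<close> runs over the partners \<open>j\<close> of the
  half-edges of \<open>v\<close>. Over a uniform perfect matching, \<open>X\<^sub>v\<close> has mean about \<open>d\<^sub>v n / \<bar>d\<bar>\<close> and,
  by a second-moment computation that only needs the number of matchings with one or two
  prescribed pairs, falls below half its mean with probability \<open>O(\<bar>d\<bar> / (d\<^sub>v n)) + O(1 / n)\<close>.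
  Hence \<open>R\<^sub>v > k\<close> with high probability as soon as \<open>d\<^sub>v > \<beta> k\<close>, \<open>\<beta> c (1 - c) > 2 E[D]\<close>.

  Limiting tree: \<open>R\<^sub>\<phi> \<le> max 1 D\<close> gives the upper bound (\<open>D \<ge> 1\<close> in the limit), and
  \<open>R\<^sub>\<phi> \<ge> c (1 - c) \<Sum> 1 / (D\<^sub>i + 1)\<close> over the children, together with Markov's inequality for
  the number of children with many offspring, gives \<open>P(R\<^sub>\<phi> > k) \<ge> P(D > \<gamma> k) / 2\<close>.
  Regular variation of the tail of \<open>D\<close> turns this into a constant multiple of \<open>P(D > k)\<close>.
\<close>

section \<open>Perfect matchings of a finite set\<close>

definition perfect_matchings :: "'a set \<Rightarrow> ('a \<Rightarrow> 'a) set" where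
  "perfect_matchings W =
     {m. (\<forall>x. x \<notin> W \<longrightarrow> m x = x) \<and> (\<forall>h\<in>W. m h \<in> W \<and> m h \<noteq> h \<and> m (m h) = h)}"

fun num_matchings :: "nat \<Rightarrow> nat" where
  "num_matchings 0 = 1"
| "num_matchings (Suc 0) = 0"
| "num_matchings (Suc (Suc k)) = Suc k * num_matchings k"

lemma num_matchings_rec: "2 \<le> k \<Longrightarrow> num_matchings k = (k - 1) * num_matchings (k - 2)"
  by (cases k rule: num_matchings.cases) auto

lemma num_matchings_even_pos: "even k \<Longrightarrow> num_matchings k > 0"
  by (induction k rule: num_matchings.induct) auto

lemma perfect_matchingsD:
  assumes "m \<in> perfect_matchings W"
  shows "x \<notin> W \<Longrightarrow> m x = x" and "h \<in> W \<Longrightarrow> m h \<in> W" and "h \<in> W \<Longrightarrow> m h \<noteq> h"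
    and "m (m x) = x"
  using assms unfolding perfect_matchings_def by (cases "x \<in> W"; auto)+

lemma perfect_matchings_permutes: "m \<in> perfect_matchings W \<Longrightarrow> m permutes W"
  unfolding permutes_def by (metis perfect_matchingsD(1,4))

lemma finite_perfect_matchings: "finite W \<Longrightarrow> finite (perfect_matchings W)"
  by (rule finite_subset[OF _ finite_permutations]) (auto dest: perfect_matchings_permutes)

lemma perfect_matchings_empty: "perfect_matchings {} = {id}"
  unfolding perfect_matchings_def by (auto simp: fun_eq_iff)

lemma perfect_matchings_remove_pair:
  assumes m: "m \<in> perfect_matchings W" and "m x = y" "x \<noteq> y"
  shows "m(x := x, y := y) \<in> perfect_matchings (W - {x, y})"
  using perfect_matchingsD[OF m] assms(2,3) unfolding perfect_matchings_def
  by (auto simp: fun_upd_def) (metis)+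

lemma perfect_matchings_insert_pair:
  assumes m: "m \<in> perfect_matchings (W - {x, y})" and "x \<in> W" "y \<in> W" "x \<noteq> y"
  shows "m(x := y, y := x) \<in> perfect_matchings W"
  using perfect_matchingsD[OF m] assms(2-4) unfolding perfect_matchings_def
  by (auto simp: fun_upd_def)

lemma card_perfect_matchings_pairing:
  assumes "x \<in> W" "y \<in> W" "x \<noteq> y"
  shows "card {m \<in> perfect_matchings W. m x = y \<and> P m}
       = card {m \<in> perfect_matchings (W - {x, y}). P (m(x := y, y := x))}"
proof (rule bij_betw_same_card[of "\<lambda>m. m(x := x, y := y)"],
       rule bij_betw_byWitness[where f' = "\<lambda>m. m(x := y, y := x)"])
  let ?A = "{m \<in> perfect_matchings W. m x = y \<and> P m}"
  let ?B = "{m \<in> perfect_matchings (W - {x, y}). P (m(x := y, y := x))}"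
  have undo: "m(x := x, y := y, x := y, y := x) = m" if "m \<in> ?A" for m
    using that perfect_matchingsD(4)[of m W x] by (auto simp: fun_eq_iff)
  show "\<forall>m\<in>?A. m(x := x, y := y, x := y, y := x) = m" using undo by blast
  show "\<forall>m\<in>?B. m(x := y, y := x, x := x, y := y) = m"
    by (auto simp: fun_eq_iff perfect_matchings_def)
  show "(\<lambda>m. m(x := x, y := y)) ` ?A \<subseteq> ?B"
  proof (rule image_subsetI)
    fix m assume m: "m \<in> ?A"
    then have "m y = x" using perfect_matchingsD(4)[of m W x] by auto
    then have "m(x := x, y := y) \<in> perfect_matchings (W - {x, y})"
      using m assms by (auto intro: perfect_matchings_remove_pair)
    then show "m(x := x, y := y) \<in> ?B" using m undo[OF m] by simp
  qed
  show "(\<lambda>m. m(x := y, y := x)) ` ?B \<subseteq> ?A"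
    using perfect_matchings_insert_pair assms by auto
qed

lemma card_perfect_matchings: "finite W \<Longrightarrow> card (perfect_matchings W) = num_matchings (card W)"
proof (induction "card W" arbitrary: W rule: less_induct)
  case less
  show ?case
  proof (cases "W = {}")
    case True
    then show ?thesis by (simp add: perfect_matchings_empty)
  next
    case False
    then obtain x where x: "x \<in> W" by auto
    have fiber: "card {m \<in> perfect_matchings W. m x = y} = num_matchings (card W - 2)"
      if y: "y \<in> W - {x}" for y
    proof -
      have c: "card (W - {x, y}) = card W - 2"
        using x y less.prems by (auto simp: card_Diff_subset)
      have "card {m \<in> perfect_matchings W. m x = y} = card (perfect_matchings (W - {x, y}))"
        using card_perfect_matchings_pairing[OF x, of y "\<lambda>_. True"] y by auto
      also have "\<dots> = num_matchings (card W - 2)"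
        using less.hyps[of "W - {x, y}"] less.prems c x
        by (metis card_gt_0_iff diff_less equals0D finite_Diff zero_less_numeral)
      finally show ?thesis .
    qed
    have "perfect_matchings W = (\<Union>y\<in>W - {x}. {m \<in> perfect_matchings W. m x = y})"
      using x unfolding perfect_matchings_def by auto
    then have "card (perfect_matchings W)
        = card (\<Union>y\<in>W - {x}. {m \<in> perfect_matchings W. m x = y})"
      by simp
    also have "\<dots> = (\<Sum>y\<in>W - {x}. card {m \<in> perfect_matchings W. m x = y})"
      by (rule card_UN_disjoint) (use less.prems finite_perfect_matchings[OF less.prems] in auto)
    also have "\<dots> = (card W - 1) * num_matchings (card W - 2)"
      using fiber x less.prems by simp
    also have "\<dots> = num_matchings (card W)"
      using False less.prems x num_matchings_rec[of "card W"]
      by (cases "card W" rule: num_matchings.cases) (auto simp: card_Suc_eq)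
    finally show ?thesis .
  qed
qed

lemma card_perfect_matchings_pair:
  assumes "finite W" "x \<in> W" "y \<in> W" "x \<noteq> y"
  shows "card {m \<in> perfect_matchings W. m x = y} = num_matchings (card W - 2)"
  using card_perfect_matchings_pairing[OF assms(2-4), of "\<lambda>_. True"]
    card_perfect_matchings[of "W - {x, y}"] assms
  by (simp add: card_Diff_subset numeral_2_eq_2)

lemma card_perfect_matchings_two_pairs:
  assumes "finite W" "h \<in> W" "a \<in> W" "h' \<in> W" "b \<in> W"
    and "distinct [h, a, h', b]"
  shows "card {m \<in> perfect_matchings W. m h = a \<and> m h' = b} = num_matchings (card W - 4)"
proof -
  have "card {m \<in> perfect_matchings W. m h = a \<and> m h' = b}
      = card {m \<in> perfect_matchings (W - {h, a}). m h' = b}"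
  proof -
    have "(m(h := a, a := h)) h' = m h'" for m :: "'a \<Rightarrow> 'a" using assms(6) by auto
    then show ?thesis using card_perfect_matchings_pairing[OF assms(2,3), of "\<lambda>m. m h' = b"] assms(6)
      by simp
  qed
  also have "\<dots> = num_matchings (card (W - {h, a}) - 2)"
    by (rule card_perfect_matchings_pair) (use assms in auto)
  also have "card (W - {h, a}) - 2 = card W - 4"
    using assms by (simp add: card_Diff_subset)
  finally show ?thesis .
qed

lemma sum_perfect_matchings_at:
  fixes f :: "'a \<Rightarrow> real"
  assumes W: "finite W" and h: "h \<in> W"
  shows "(\<Sum>m\<in>perfect_matchings W. f (m h)) = num_matchings (card W - 2) * (\<Sum>a\<in>W - {h}. f a)"
proof -
  have "(\<Sum>m\<in>perfect_matchings W. f (m h))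
      = (\<Sum>a\<in>W - {h}. \<Sum>m\<in>{m \<in> perfect_matchings W. m h = a}. f (m h))"
    by (rule sum.group[symmetric])
      (use W h in \<open>auto simp: finite_perfect_matchings dest: perfect_matchingsD(2,3)[of _ W h]\<close>)
  also have "\<dots> = (\<Sum>a\<in>W - {h}. num_matchings (card W - 2) * f a)"
    by (intro sum.cong refl) (use card_perfect_matchings_pair[OF W h] in auto)
  finally show ?thesis by (simp add: sum_distrib_left)
qed

lemma card_perfect_matchings_at_pair_le:
  assumes W: "finite W" and hh: "h \<in> W" "h' \<in> W" "h \<noteq> h'"
  shows "card {m \<in> perfect_matchings W. m h = a \<and> m h' = b}
       \<le> (if a = h' \<and> b = h then num_matchings (card W - 2)
          else if a \<in> W - {h, h'} \<and> b \<in> W - {h, h'} then num_matchings (card W - 4) else 0)"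
proof -
  let ?F = "{m \<in> perfect_matchings W. m h = a \<and> m h' = b}"
  consider "a = h' \<and> b = h" | "a \<in> W - {h, h'} \<and> b \<in> W - {h, h'} \<and> a \<noteq> b" | "?F = {}"
  proof (cases "?F = {}")
    case False
    then obtain m where m: "m \<in> perfect_matchings W" "m h = a" "m h' = b" by auto
    note mD = perfect_matchingsD[OF m(1)]
    have "a = h' \<longleftrightarrow> b = h" and "a \<noteq> b" using m mD(4)[of h] mD(4)[of h'] hh(3) by metis+
    then show ?thesis using that mD(2,3) hh m by auto
  qed
  then show ?thesis
  proof cases
    case 1
    then have "card ?F \<le> card {m \<in> perfect_matchings W. m h = h'}"
      by (intro card_mono) (use finite_perfect_matchings[OF W] in auto)
    then show ?thesis using card_perfect_matchings_pair[OF W hh] 1 by simp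
  next
    case 2
    then show ?thesis using card_perfect_matchings_two_pairs[OF W hh(1) _ hh(2), of a b] hh by auto
  next
    case 3
    then show ?thesis by (simp only: card.empty)
  qed
qed

lemma sum_perfect_matchings_at_pair_le:
  fixes f :: "'a \<Rightarrow> real"
  assumes W: "finite W" and hh: "h \<in> W" "h' \<in> W" "h \<noteq> h'"
    and f: "\<And>a. 0 \<le> f a" "\<And>a. f a \<le> 1"
  shows "(\<Sum>m\<in>perfect_matchings W. f (m h) * f (m h'))
     \<le> num_matchings (card W - 2)
        + num_matchings (card W - 4) * (\<Sum>a\<in>W - {h}. f a) * (\<Sum>b\<in>W - {h'}. f b)"
proof -
  define G2 where "G2 = real (num_matchings (card W - 2))"
  define G4 where "G4 = real (num_matchings (card W - 4))"
  define V where "V = W - {h, h'}"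
  define bound where "bound p = (if p = (h', h) then G2 else if p \<in> V \<times> V then G4 else 0)" for p
  let ?F = "\<lambda>p. {m \<in> perfect_matchings W. (m h, m h') = p}"
  have "(\<Sum>m\<in>perfect_matchings W. f (m h) * f (m h'))
      = (\<Sum>p\<in>W \<times> W. \<Sum>m\<in>?F p. f (m h) * f (m h'))"
    by (rule sum.group[symmetric])
      (use W hh in \<open>auto simp: finite_perfect_matchings dest: perfect_matchingsD(2)\<close>)
  also have "\<dots> = (\<Sum>p\<in>W \<times> W. real (card (?F p)) * (f (fst p) * f (snd p)))"
    by (intro sum.cong refl) auto
  also have "\<dots> \<le> (\<Sum>p\<in>W \<times> W. bound p * (f (fst p) * f (snd p)))"
  proof (intro sum_mono mult_right_mono)
    fix p :: "'a \<times> 'a"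
    show "real (card (?F p)) \<le> bound p"
      using card_perfect_matchings_at_pair_le[OF W hh, of "fst p" "snd p"]
      unfolding bound_def G2_def G4_def V_def by (cases p) (auto split: if_splits)
  qed (use f in auto)
  also have "\<dots> = G2 * (f h' * f h) + (\<Sum>p\<in>V \<times> V. G4 * (f (fst p) * f (snd p)))"
  proof -
    have "(\<Sum>p\<in>W \<times> W. bound p * (f (fst p) * f (snd p)))
        = (\<Sum>p\<in>W \<times> W. (if p = (h', h) then G2 * (f h' * f h) else 0)
                       + (if p \<in> V \<times> V then G4 * (f (fst p) * f (snd p)) else 0))"
      by (intro sum.cong refl) (auto simp: bound_def V_def)
    also have "\<dots> = G2 * (f h' * f h) + (\<Sum>p\<in>V \<times> V. G4 * (f (fst p) * f (snd p)))"
      using W hh unfolding V_def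
      by (simp add: sum.distrib sum.If_cases Int_absorb1 Sigma_mono Diff_subset)
    finally show ?thesis .
  qed
  also have "\<dots> \<le> G2 + G4 * (\<Sum>a\<in>W - {h}. f a) * (\<Sum>b\<in>W - {h'}. f b)"
  proof (intro add_mono)
    show "G2 * (f h' * f h) \<le> G2"
      using f by (simp add: G2_def mult_le_one mult_left_le)
    have "(\<Sum>a\<in>V. f a) * (\<Sum>b\<in>V. f b) = (\<Sum>p\<in>V \<times> V. f (fst p) * f (snd p))"
      unfolding sum_product sum.cartesian_product by (simp add: split_def)
    then have "(\<Sum>p\<in>V \<times> V. G4 * (f (fst p) * f (snd p))) = G4 * ((\<Sum>a\<in>V. f a) * (\<Sum>b\<in>V. f b))"
      by (simp add: sum_distrib_left)
    also have "\<dots> \<le> G4 * ((\<Sum>a\<in>W - {h}. f a) * (\<Sum>b\<in>W - {h'}. f b))"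
      unfolding V_def using W f
      by (intro mult_left_mono mult_mono sum_mono2 sum_nonneg) (auto simp: G4_def)
    finally show "(\<Sum>p\<in>V \<times> V. G4 * (f (fst p) * f (snd p)))
        \<le> G4 * (\<Sum>a\<in>W - {h}. f a) * (\<Sum>b\<in>W - {h'}. f b)" by (simp add: mult.assoc)
  qed
  finally show ?thesis unfolding G2_def G4_def .
qed

lemma sum_perfect_matchings_linear:
  fixes f :: "'a \<Rightarrow> real"
  assumes "finite W" "H \<subseteq> W"
  shows "(\<Sum>m\<in>perfect_matchings W. \<Sum>h\<in>H. f (m h))
       = num_matchings (card W - 2) * (\<Sum>h\<in>H. \<Sum>a\<in>W - {h}. f a)"
  using assms by (subst sum.swap) (auto simp: sum_distrib_left subsetD sum_perfect_matchings_at intro!: sum.cong)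

lemma sum_perfect_matchings_linear_sq_le:
  fixes f :: "'a \<Rightarrow> real"
  assumes W: "finite W" and H: "H \<subseteq> W" and f: "\<And>a. 0 \<le> f a" "\<And>a. f a \<le> 1"
  defines "T \<equiv> \<Sum>h\<in>H. \<Sum>a\<in>W - {h}. f a"
  shows "(\<Sum>m\<in>perfect_matchings W. (\<Sum>h\<in>H. f (m h))\<^sup>2)
     \<le> real (num_matchings (card W - 2)) * (T + (real (card H))\<^sup>2)
        + real (num_matchings (card W - 4)) * T\<^sup>2"
proof -
  define G2 where "G2 = real (num_matchings (card W - 2))"
  define G4 where "G4 = real (num_matchings (card W - 4))"
  define S where "S h = (\<Sum>a\<in>W - {h}. f a)" for h
  have finH: "finite H" using W H finite_subset by blast
  have S_nonneg: "0 \<le> S h" for h unfolding S_def using f by (simp add: sum_nonneg)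
  have row: "(\<Sum>h'\<in>H. \<Sum>m\<in>perfect_matchings W. f (m h) * f (m h'))
      \<le> G2 * S h + (card H * G2 + G4 * S h * T)" if h: "h \<in> H" for h
  proof -
    have hW: "h \<in> W" using h H by auto
    have "(\<Sum>h'\<in>H. \<Sum>m\<in>perfect_matchings W. f (m h) * f (m h'))
        = (\<Sum>m\<in>perfect_matchings W. f (m h) * f (m h))
          + (\<Sum>h'\<in>H - {h}. \<Sum>m\<in>perfect_matchings W. f (m h) * f (m h'))"
      using h finH by (simp add: sum.remove)
    also have "(\<Sum>m\<in>perfect_matchings W. f (m h) * f (m h)) \<le> (\<Sum>m\<in>perfect_matchings W. f (m h))"
      by (intro sum_mono) (rule mult_left_le[OF f(2,1)])
    also have "(\<Sum>m\<in>perfect_matchings W. f (m h)) = G2 * S h"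
      using sum_perfect_matchings_at[OF W hW] unfolding G2_def S_def .
    also have "(\<Sum>h'\<in>H - {h}. \<Sum>m\<in>perfect_matchings W. f (m h) * f (m h'))
        \<le> (\<Sum>h'\<in>H. G2 + G4 * S h * S h')"
    proof -
      have "(\<Sum>h'\<in>H - {h}. \<Sum>m\<in>perfect_matchings W. f (m h) * f (m h'))
          \<le> (\<Sum>h'\<in>H - {h}. G2 + G4 * S h * S h')"
        using sum_perfect_matchings_at_pair_le[where f = f, OF W hW _ _ f] H
        unfolding G2_def G4_def S_def by (intro sum_mono) auto
      also have "\<dots> \<le> (\<Sum>h'\<in>H. G2 + G4 * S h * S h')"
        using finH S_nonneg by (intro sum_mono2) (auto simp: G2_def G4_def)
      finally show ?thesis .
    qed
    also have "(\<Sum>h'\<in>H. G2 + G4 * S h * S h') = card H * G2 + G4 * S h * T"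
      unfolding T_def S_def by (simp add: sum.distrib sum_distrib_left)
    finally show ?thesis by simp
  qed
  have "(\<Sum>m\<in>perfect_matchings W. (\<Sum>h\<in>H. f (m h))\<^sup>2)
      = (\<Sum>h\<in>H. \<Sum>h'\<in>H. \<Sum>m\<in>perfect_matchings W. f (m h) * f (m h'))"
    by (simp add: power2_eq_square sum_product sum.swap[of _ "perfect_matchings W"])
  also have "\<dots> \<le> (\<Sum>h\<in>H. G2 * S h + (card H * G2 + G4 * S h * T))"
    by (rule sum_mono) (rule row)
  also have "\<dots> = G2 * (\<Sum>h\<in>H. S h) + card H * (card H * G2) + G4 * (\<Sum>h\<in>H. S h) * T"
    by (simp add: sum.distrib sum_distrib_left sum_distrib_right)
  also have "\<dots> = G2 * (T + (real (card H))\<^sup>2) + G4 * T\<^sup>2"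
    unfolding T_def S_def by (simp add: power2_eq_square algebra_simps)
  finally show ?thesis unfolding G2_def G4_def .
qed

lemma card_le_half_mean:
  fixes X :: "'b \<Rightarrow> real" and \<mu> :: real
  assumes M: "finite M" and mean: "(\<Sum>m\<in>M. X m) = card M * \<mu>" and \<mu>: "0 \<le> \<mu>"
  shows "card {m \<in> M. X m \<le> \<mu> / 2} * (\<mu> / 2)\<^sup>2 \<le> (\<Sum>m\<in>M. (X m)\<^sup>2) - card M * \<mu>\<^sup>2"
proof -
  have "card {m \<in> M. X m \<le> \<mu> / 2} * (\<mu> / 2)\<^sup>2 = (\<Sum>m\<in>{m \<in> M. X m \<le> \<mu> / 2}. (\<mu> / 2)\<^sup>2)"
    by simp
  also have "\<dots> \<le> (\<Sum>m\<in>{m \<in> M. X m \<le> \<mu> / 2}. (\<mu> - X m)\<^sup>2)"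
    by (intro sum_mono power_mono) (use \<mu> in auto)
  also have "\<dots> \<le> (\<Sum>m\<in>M. (\<mu> - X m)\<^sup>2)"
    by (intro sum_mono2) (use M in auto)
  also have "\<dots> = (\<Sum>m\<in>M. (X m)\<^sup>2 - 2 * \<mu> * X m + \<mu>\<^sup>2)"
    by (intro sum.cong) (auto simp: power2_eq_square algebra_simps)
  also have "\<dots> = (\<Sum>m\<in>M. (X m)\<^sup>2) - 2 * \<mu> * (\<Sum>m\<in>M. X m) + card M * \<mu>\<^sup>2"
    by (simp add: sum.distrib sum_subtractf sum_distrib_left)
  finally show ?thesis using mean by (simp add: power2_eq_square mult_ac)
qed

lemma perfect_matchings_lower_tail:
  fixes f :: "'a \<Rightarrow> real" and \<mu> :: real
  assumes W: "finite W" "even (card W)" "4 \<le> card W" and H: "H \<subseteq> W"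
    and f: "\<And>a. 0 \<le> f a" "\<And>a. f a \<le> 1"
    and \<mu>: "\<mu> = (\<Sum>h\<in>H. \<Sum>a\<in>W - {h}. f a) / (real (card W) - 1)" "0 < \<mu>"
  shows "real (card {m \<in> perfect_matchings W. (\<Sum>h\<in>H. f (m h)) \<le> \<mu> / 2})
           / real (card (perfect_matchings W))
     \<le> 4 / \<mu> + 4 * (real (card H))\<^sup>2 / ((real (card W) - 1) * \<mu>\<^sup>2) + 8 / (real (card W) - 3)"
proof -
  define L where "L = real (card W)"
  define G where "G = real (card (perfect_matchings W))"
  define G4 where "G4 = real (num_matchings (card W - 4))"
  define X where "X m = (\<Sum>h\<in>H. f (m h))" for m
  define B where "B = real (card {m \<in> perfect_matchings W. X m \<le> \<mu> / 2})"
  have L: "L \<ge> 4" using W(3) unfolding L_def by simp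
  define j where "j = card W - 4"
  have j: "card W = Suc (Suc (Suc (Suc j)))" using W(3) unfolding j_def by simp
  have G2: "real (num_matchings (card W - 2)) = (L - 3) * G4"
    unfolding G4_def L_def j by (simp add: algebra_simps)
  have G: "G = (L - 1) * ((L - 3) * G4)"
    using W(1) unfolding G_def G4_def L_def by (simp add: card_perfect_matchings j algebra_simps)
  have "G4 > 0"
    using num_matchings_even_pos[of "card W - 4"] W(2,3) unfolding G4_def by simp
  then have "G > 0" using L G by simp
  have T: "(\<Sum>h\<in>H. \<Sum>a\<in>W - {h}. f a) = (L - 1) * \<mu>"
    using \<mu>(1) L unfolding L_def by simp
  have mean: "(\<Sum>m\<in>perfect_matchings W. X m) = G * \<mu>"
    using sum_perfect_matchings_linear[OF W(1) H, of f] unfolding X_def T G2 G by simp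
  have "B * (\<mu> / 2)\<^sup>2 \<le> (\<Sum>m\<in>perfect_matchings W. (X m)\<^sup>2) - G * \<mu>\<^sup>2"
    using card_le_half_mean[of "perfect_matchings W" X \<mu>] finite_perfect_matchings[OF W(1)] mean \<mu>(2)
    unfolding B_def G_def by simp
  also have "\<dots> \<le> (L - 3) * G4 * ((L - 1) * \<mu> + (real (card H))\<^sup>2) + G4 * ((L - 1) * \<mu>)\<^sup>2 - G * \<mu>\<^sup>2"
    using sum_perfect_matchings_linear_sq_le[where f = f, OF W(1) H f] unfolding X_def T G2 G4_def by simp
  also have "\<dots> = G4 * ((L - 1) * (L - 3) * \<mu> + (L - 3) * (real (card H))\<^sup>2 + 2 * (L - 1) * \<mu>\<^sup>2)"
    unfolding G by (simp add: power2_eq_square algebra_simps)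
  finally have "B \<le> G4 * ((L - 1) * (L - 3) * \<mu> + (L - 3) * (real (card H))\<^sup>2 + 2 * (L - 1) * \<mu>\<^sup>2)
      / (\<mu> / 2)\<^sup>2"
    using \<mu>(2) by (simp add: pos_le_divide_eq)
  also have "\<dots> = G * (4 / \<mu> + 4 * (real (card H))\<^sup>2 / ((L - 1) * \<mu>\<^sup>2) + 8 / (L - 3))"
  proof -
    have nz: "L - 1 \<noteq> 0" "L - 3 \<noteq> 0" "\<mu> \<noteq> 0" using L \<mu>(2) by auto
    have "G * (4 / \<mu>) = G4 * ((L - 1) * (L - 3) * \<mu>) / (\<mu> / 2)\<^sup>2"
      "G * (4 * (real (card H))\<^sup>2 / ((L - 1) * \<mu>\<^sup>2)) = G4 * ((L - 3) * (real (card H))\<^sup>2) / (\<mu> / 2)\<^sup>2"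
      "G * (8 / (L - 3)) = G4 * (2 * (L - 1) * \<mu>\<^sup>2) / (\<mu> / 2)\<^sup>2"
      using nz unfolding G by (simp_all add: field_simps power2_eq_square)
    then show ?thesis by (simp add: distrib_left add_divide_distrib)
  qed
  finally have "B / G \<le> 4 / \<mu> + 4 * (real (card H))\<^sup>2 / ((L - 1) * \<mu>\<^sup>2) + 8 / (L - 3)"
    using \<open>G > 0\<close> by (simp add: divide_le_eq mult.commute)
  then show ?thesis unfolding B_def G_def X_def L_def .
qed

section \<open>PageRank in the configuration model\<close>

lemma card_half_edges [simp]: "card (half_edges dv j) = dv j"
  unfolding half_edges_def by simp

lemma finite_half_edges [simp]: "finite (half_edges dv j)"
  unfolding half_edges_def by simp

lemma half_edges_subset: "j < n \<Longrightarrow> half_edges dv j \<subseteq> {..<sum dv {..<n}}"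
  unfolding half_edges_def using sum_mono2[of "{..<n}" "{..<Suc j}" dv] by auto

lemma half_edges_disjoint:
  assumes "a \<in> half_edges dv i" "a \<in> half_edges dv j"
  shows "i = j"
proof (rule ccontr)
  assume "i \<noteq> j"
  moreover have False if "i' < j'" "a \<in> half_edges dv i'" "a \<in> half_edges dv j'" for i' j'
    using that sum_mono2[of "{..<j'}" "{..<Suc i'}" dv] unfolding half_edges_def by auto
  ultimately show False using assms by (metis linorder_neqE_nat)
qed

lemma UN_half_edges: "(\<Union>j<n. half_edges dv j) = {..<sum dv {..<n}}"
proof (induction n)
  case (Suc n)
  have "{..<sum dv {..<Suc n}} = {..<sum dv {..<n}} \<union> half_edges dv n"
    unfolding half_edges_def by auto
  then show ?case using Suc by (simp add: lessThan_Suc Un_commute)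
qed simp

lemma matchings_eq_perfect_matchings: "matchings dv n = perfect_matchings {..<sum dv {..<n}}"
  unfolding matchings_def perfect_matchings_def
  by (auto simp: permutes_not_in intro!: perfect_matchings_permutes[unfolded perfect_matchings_def])
    (metis lessThan_iff permutes_in_image)

definition owner_weight :: "(nat \<Rightarrow> nat) \<Rightarrow> nat \<Rightarrow> nat \<Rightarrow> real" where
  "owner_weight dv n a = (\<Sum>j<n. if a \<in> half_edges dv j then 1 / real (dv j) else 0)"

lemma owner_weight_eq:
  assumes "v < n" "a \<in> half_edges dv v"
  shows "owner_weight dv n a = 1 / real (dv v)"
proof -
  have "owner_weight dv n a = (\<Sum>j\<in>{v}. if a \<in> half_edges dv j then 1 / real (dv j) else 0)"
    unfolding owner_weight_def
    by (rule sum.mono_neutral_right) (use assms half_edges_disjoint in auto)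
  then show ?thesis using assms by simp
qed

lemma owner_weight_nonneg: "0 \<le> owner_weight dv n a"
  unfolding owner_weight_def by (auto intro: sum_nonneg)

lemma owner_weight_le_1: "owner_weight dv n a \<le> 1"
proof (cases "\<exists>v<n. a \<in> half_edges dv v")
  case True
  then obtain v where v: "v < n" "a \<in> half_edges dv v" by auto
  then have "dv v \<noteq> 0" using card_half_edges[of dv v] by (metis card_0_eq empty_iff finite_half_edges)
  then show ?thesis using owner_weight_eq[OF v] by simp
next
  case False
  then show ?thesis unfolding owner_weight_def by (simp add: sum.neutral)
qed

lemma sum_owner_weight:
  assumes pos: "\<And>i. i < n \<Longrightarrow> 1 \<le> dv i"
  shows "(\<Sum>a<sum dv {..<n}. owner_weight dv n a) = real n"
proof -
  have "(\<Sum>a<sum dv {..<n}. owner_weight dv n a)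
      = (\<Sum>j<n. \<Sum>a<sum dv {..<n}. if a \<in> half_edges dv j then 1 / real (dv j) else 0)"
    unfolding owner_weight_def by (rule sum.swap)
  also have "\<dots> = (\<Sum>j<n. \<Sum>a\<in>half_edges dv j. 1 / real (dv j))"
  proof (rule sum.cong[OF refl])
    fix j assume "j \<in> {..<n}"
    then show "(\<Sum>a<sum dv {..<n}. if a \<in> half_edges dv j then 1 / real (dv j) else 0)
        = (\<Sum>a\<in>half_edges dv j. 1 / real (dv j))"
      using half_edges_subset[of j n dv] by (simp add: sum.If_cases Int_absorb1)
  qed
  also have "\<dots> = (\<Sum>j<n. 1)" using pos by (intro sum.cong) (auto simp: Suc_le_eq)
  finally show ?thesis by simp
qed

lemma cm_adj_sym:
  assumes "m \<in> perfect_matchings W"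
  shows "cm_adj dv m i j = cm_adj dv m j i"
  unfolding cm_adj_def
  by (rule bij_betw_same_card, rule bij_betw_byWitness[where f' = m])
    (use perfect_matchingsD(4)[OF assms] in auto)

lemma cm_adj_row_sum:
  assumes m: "m \<in> matchings dv n" and k: "k < n"
  shows "(\<Sum>j<n. cm_adj dv m k j) = dv k"
proof -
  have "(\<Sum>j<n. cm_adj dv m k j) = card (\<Union>j<n. {h \<in> half_edges dv k. m h \<in> half_edges dv j})"
    unfolding cm_adj_def by (rule card_UN_disjoint[symmetric]) (auto dest: half_edges_disjoint)
  also have "(\<Union>j<n. {h \<in> half_edges dv k. m h \<in> half_edges dv j}) = half_edges dv k"
  proof -
    have "m h \<in> (\<Union>j<n. half_edges dv j)" if "h \<in> half_edges dv k" for h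
      using that half_edges_subset[OF k] perfect_matchingsD(2)[of m "{..<sum dv {..<n}}" h] m
      by (auto simp: UN_half_edges matchings_eq_perfect_matchings)
    then show ?thesis by blast
  qed
  finally show ?thesis by simp
qed

lemma col_sum_Suc_0:
  assumes m: "m \<in> matchings dv n" and v: "v < n"
  shows "col_sum dv n m 1 v = (\<Sum>h\<in>half_edges dv v. owner_weight dv n (m h))"
proof -
  have "col_sum dv n m 1 v = (\<Sum>j<n. real (cm_adj dv m v j) / real (dv j))"
    using cm_adj_sym m by (simp add: matchings_eq_perfect_matchings)
  also have "\<dots> = (\<Sum>j<n. \<Sum>h\<in>half_edges dv v. if m h \<in> half_edges dv j then 1 / real (dv j) else 0)"
    unfolding cm_adj_def by (intro sum.cong) (simp_all add: sum.If_cases Int_def)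
  also have "\<dots> = (\<Sum>h\<in>half_edges dv v. owner_weight dv n (m h))"
    unfolding owner_weight_def by (rule sum.swap)
  finally show ?thesis .
qed

lemma col_sum_le_degree:
  assumes m: "m \<in> matchings dv n" and pos: "\<And>i. i < n \<Longrightarrow> 1 \<le> dv i" and k: "k < n"
  shows "0 \<le> col_sum dv n m s k \<and> col_sum dv n m s k \<le> dv k"
  using k
proof (induction s arbitrary: k)
  case 0
  then show ?case using pos[of k] by simp
next
  case (Suc s)
  have "col_sum dv n m (Suc s) k \<le> (\<Sum>j<n. real (cm_adj dv m j k))"
    unfolding col_sum.simps
  proof (rule sum_mono)
    fix j assume j: "j \<in> {..<n}"
    then have "col_sum dv n m s j * real (cm_adj dv m j k) \<le> real (dv j) * real (cm_adj dv m j k)"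
      using Suc.IH[of j] by (intro mult_right_mono) auto
    then show "col_sum dv n m s j * real (cm_adj dv m j k) / real (dv j) \<le> real (cm_adj dv m j k)"
      using pos[of j] j by (simp add: divide_le_eq mult.commute)
  qed
  also have "\<dots> = dv k"
    using cm_adj_row_sum[OF m Suc.prems] cm_adj_sym m
    by (simp add: matchings_eq_perfect_matchings flip: of_nat_sum)
  finally show ?case using Suc.IH by (auto intro!: sum_nonneg divide_nonneg_nonneg)
qed

lemma pagerank_bounds:
  assumes m: "m \<in> matchings dv n" and pos: "\<And>i. i < n \<Longrightarrow> 1 \<le> dv i" and k: "k < n"
    and c: "0 < c" "c < 1"
  shows pagerank_le_degree: "pagerank c dv n m k \<le> dv k"
    and pagerank_ge_col_sum_Suc_0: "(1 - c) * (1 + c * col_sum dv n m 1 k) \<le> pagerank c dv n m k"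
proof -
  note bound = col_sum_le_degree[OF m pos k]
  have geom: "summable (\<lambda>s. c ^ s * dv k)"
    using c by (intro summable_mult2 summable_geometric) simp
  have terms: "0 \<le> c ^ s * col_sum dv n m s k \<and> c ^ s * col_sum dv n m s k \<le> c ^ s * dv k" for s
    using bound[of s] c by (auto intro: mult_left_mono)
  then have summable: "summable (\<lambda>s. c ^ s * col_sum dv n m s k)"
    by (intro summable_comparison_test'[OF geom, where N = 0]) auto
  have "(\<Sum>s. c ^ s * col_sum dv n m s k) \<le> (\<Sum>s. c ^ s * dv k)"
    using terms by (intro suminf_le[OF _ summable geom]) auto
  also have "\<dots> = dv k / (1 - c)"
    using c by (simp add: suminf_mult2[symmetric] suminf_geometric)
  finally show "pagerank c dv n m k \<le> dv k"
    unfolding pagerank_def using c by (simp add: field_simps)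
  have "(\<Sum>s<2. c ^ s * col_sum dv n m s k) \<le> (\<Sum>s. c ^ s * col_sum dv n m s k)"
    using terms by (intro sum_le_suminf[OF summable]) auto
  then show "(1 - c) * (1 + c * col_sum dv n m 1 k) \<le> pagerank c dv n m k"
    unfolding pagerank_def using c by (intro mult_left_mono) (auto simp: numeral_2_eq_2)
qed

lemma matchings_nonempty:
  assumes "even (sum dv {..<n})"
  shows "finite (matchings dv n)" "matchings dv n \<noteq> {}"
  using card_perfect_matchings[of "{..<sum dv {..<n}}"] num_matchings_even_pos[OF assms]
  by (auto simp: matchings_eq_perfect_matchings finite_perfect_matchings)

lemma measure_pair_pmf_of_set:
  assumes M: "finite M" "M \<noteq> {}" and I: "finite I" "I \<noteq> {}"
  shows "measure (pair_pmf (pmf_of_set M) (pmf_of_set I)) A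
       = (\<Sum>i\<in>I. real (card {m \<in> M. (m, i) \<in> A}) / card M) / card I"
proof -
  let ?p = "pair_pmf (pmf_of_set M) (pmf_of_set I)"
  have "measure ?p A = measure ?p (A \<inter> (M \<times> I))"
    using measure_Int_set_pmf[of ?p A] M I by simp
  also have "\<dots> = (\<Sum>x\<in>A \<inter> (M \<times> I). pmf ?p x)"
    using M I by (intro measure_measure_pmf_finite) auto
  also have "\<dots> = (\<Sum>x\<in>{x \<in> M \<times> I. x \<in> A}. 1 / (real (card M) * real (card I)))"
    using M I by (intro sum.cong) (auto simp: pmf_pair M I)
  also have "\<dots> = (\<Sum>x\<in>M \<times> I. if x \<in> A then 1 / (real (card M) * real (card I)) else 0)"
    using M I by (intro sum.inter_filter) auto
  also have "\<dots> = (\<Sum>i\<in>I. \<Sum>m\<in>M. if (m, i) \<in> A then 1 / (real (card M) * real (card I)) else 0)"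
    by (subst sum.swap) (simp add: sum.cartesian_product split_def)
  also have "\<dots> = (\<Sum>i\<in>I. real (card {m \<in> M. (m, i) \<in> A}) / card M) / card I"
    using M by (simp add: sum.If_cases sum_divide_distrib Int_def)
  finally show ?thesis .
qed

lemma prob_root_pr_gt_eq:
  assumes "even (sum dv {..<n})" "n \<ge> 1"
  shows "prob_root_pr_gt c dv n k
       = (\<Sum>i<n. real (card {m \<in> matchings dv n. pagerank c dv n m i > k}) / card (matchings dv n)) / n"
  using measure_pair_pmf_of_set[of "matchings dv n" "{..<n}"] matchings_nonempty[OF assms(1)] assms(2)
  unfolding prob_root_pr_gt_def cm_root_def by (simp add: lessThan_empty_iff)

lemma prob_deg_law:
  assumes "n \<ge> 1"
  shows "measure_pmf.prob (deg_law dv n) {j. P (real j)} = real (card {i \<in> {..<n}. P (dv i)}) / n"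
proof -
  have "measure_pmf.prob (deg_law dv n) {j. P (real j)}
      = measure_pmf.prob (pmf_of_set {..<n}) (dv -` {j. P (real j)})"
    unfolding deg_law_def by simp
  also have "\<dots> = real (card ({..<n} \<inter> dv -` {j. P (real j)})) / card {..<n::nat}"
    using assms by (subst measure_pmf_of_set) (auto simp: lessThan_empty_iff)
  also have "{..<n} \<inter> dv -` {j. P (real j)} = {i \<in> {..<n}. P (dv i)}" by auto
  finally show ?thesis by simp
qed

theorem prob_root_pr_gt_le_deg_tail:
  assumes pos: "\<And>i. i < n \<Longrightarrow> 1 \<le> dv i" and ev: "even (sum dv {..<n})" and n: "n \<ge> 1"
    and c: "0 < c" "c < 1"
  shows "prob_root_pr_gt c dv n k \<le> measure_pmf.prob (deg_law dv n) {j. real j > k}"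
proof -
  have "real (card {m \<in> matchings dv n. pagerank c dv n m i > k}) / card (matchings dv n)
      \<le> (if dv i > k then 1 else 0)" if i: "i < n" for i
  proof (cases "dv i > k")
    case True
    have "card {m \<in> matchings dv n. pagerank c dv n m i > k} \<le> card (matchings dv n)"
      using matchings_nonempty[OF ev] by (intro card_mono) auto
    then show ?thesis using True matchings_nonempty[OF ev] by (simp add: divide_le_eq_1 card_gt_0_iff)
  next
    case False
    then have none: "{m \<in> matchings dv n. pagerank c dv n m i > k} = {}"
      using pagerank_le_degree[OF _ pos i c] by force
    then show ?thesis using False by (simp add: none)
  qed
  then have "prob_root_pr_gt c dv n k \<le> (\<Sum>i<n. if dv i > k then 1 else 0) / n"
    unfolding prob_root_pr_gt_eq[OF ev n] by (intro divide_right_mono sum_mono) auto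
  also have "\<dots> = measure_pmf.prob (deg_law dv n) {j. real j > k}"
    using prob_deg_law[OF n, of dv "\<lambda>x. x > k"] by (simp add: sum.If_cases Int_def)
  finally show ?thesis .
qed

lemma card_ratio_ge_complement:
  assumes "finite M" "M \<noteq> {}" "\<And>m. m \<in> M \<Longrightarrow> \<not> P m \<Longrightarrow> Q m"
  shows "1 - real (card {m \<in> M. P m}) / card M \<le> real (card {m \<in> M. Q m}) / card M"
proof -
  have "card M \<le> card ({m \<in> M. P m} \<union> {m \<in> M. Q m})"
    using assms by (intro card_mono) auto
  also have "\<dots> \<le> card {m \<in> M. P m} + card {m \<in> M. Q m}"
    by (rule card_Un_le)
  finally have "real (card M) - card {m \<in> M. P m} \<le> card {m \<in> M. Q m}" by linarith
  then have "(real (card M) - card {m \<in> M. P m}) / card M \<le> card {m \<in> M. Q m} / card M"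
    by (rule divide_right_mono) simp
  then show ?thesis
    using assms(1,2) by (simp add: diff_divide_distrib card_gt_0_iff)
qed

lemma pagerank_gt_of_col_sum_Suc_0:
  assumes m: "m \<in> matchings dv n" and pos: "\<And>i. i < n \<Longrightarrow> 1 \<le> dv i" and v: "v < n"
    and c: "0 < c" "c < 1" and k: "k \<le> c * (1 - c) * col_sum dv n m 1 v"
  shows "k < pagerank c dv n m v"
proof -
  have "k < (1 - c) * (1 + c * col_sum dv n m 1 v)"
    using k c by (simp add: algebra_simps)
  also have "\<dots> \<le> pagerank c dv n m v"
    by (rule pagerank_ge_col_sum_Suc_0[OF m pos v c])
  finally show ?thesis .
qed

lemma sum_owner_weight_Diff:
  assumes pos: "\<And>i. i < n \<Longrightarrow> 1 \<le> dv i" and v: "v < n" and h: "h \<in> half_edges dv v"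
  shows "(\<Sum>a\<in>{..<sum dv {..<n}} - {h}. owner_weight dv n a) = real n - 1 / dv v"
  using half_edges_subset[OF v] h sum_owner_weight[OF pos] owner_weight_eq[OF v h]
  by (auto simp: sum_diff1)

text \<open>In one step a vertex \<open>v\<close> receives the mass \<open>X = col_sum dv n m 1 v\<close>, a sum of \<open>1 / d\<close> over
  the partners of its half-edges. Its mean over all matchings is about \<open>d\<^sub>v n / S\<close>, it rarely falls
  below half of that by the second-moment bound, and \<open>R\<^sub>v \<ge> c (1 - c) X\<close>.\<close>

lemma pagerank_gt_at_vertex_whp:
  fixes dv :: "nat \<Rightarrow> nat" and n v :: nat and c k :: real
  defines "S \<equiv> sum dv {..<n}"
  assumes pos: "\<And>i. i < n \<Longrightarrow> 1 \<le> dv i" and ev: "even S" and n: "n \<ge> 2" and S: "S \<ge> 4"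
    and v: "v < n" and c: "0 < c" "c < 1"
    and k: "2 * k * (real S - 1) < c * (1 - c) * dv v * (real n - 1)"
  shows "1 - (4 * (real S - 1) / (dv v * (real n - 1)) + 4 * (real S - 1) / (real n - 1)\<^sup>2
              + 8 / (real S - 3))
     \<le> real (card {m \<in> matchings dv n. pagerank c dv n m v > k}) / card (matchings dv n)"
proof -
  define W where "W = {..<S}"
  define H where "H = half_edges dv v"
  define X where "X m = (\<Sum>h\<in>H. owner_weight dv n (m h))" for m :: "nat \<Rightarrow> nat"
  define \<mu> where "\<mu> = (\<Sum>h\<in>H. \<Sum>a\<in>W - {h}. owner_weight dv n a) / (real (card W) - 1)"
  define d where "d = real (dv v)"
  define \<mu>0 where "\<mu>0 = d * (real n - 1) / (real S - 1)"
  have d: "d \<ge> 1" unfolding d_def using pos[OF v] by simp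
  have HW: "H \<subseteq> W" unfolding H_def W_def S_def by (rule half_edges_subset[OF v])
  have \<mu>_eq: "\<mu> = d * (real n - 1 / d) / (real S - 1)"
    using sum_owner_weight_Diff[OF pos v] unfolding \<mu>_def H_def d_def W_def S_def by simp
  have "\<mu>0 \<le> \<mu>" unfolding \<mu>_eq \<mu>0_def using d S
    by (intro divide_right_mono) (auto simp: algebra_simps)
  moreover have "\<mu>0 > 0" unfolding \<mu>0_def using d n S by (intro divide_pos_pos mult_pos_pos) auto
  ultimately have "\<mu> > 0" by simp
  have "pagerank c dv n m v > k" if m: "m \<in> matchings dv n" "\<not> X m \<le> \<mu> / 2" for m
  proof (rule pagerank_gt_of_col_sum_Suc_0[OF m(1) pos v c])
    have "k \<le> c * (1 - c) * (\<mu>0 / 2)"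
      using k S unfolding \<mu>0_def d_def by (simp add: field_simps)
    also have "\<dots> \<le> c * (1 - c) * X m"
      using \<open>\<mu>0 \<le> \<mu>\<close> m(2) c by (intro mult_left_mono) auto
    finally show "k \<le> c * (1 - c) * col_sum dv n m 1 v"
      using col_sum_Suc_0[OF m(1) v] unfolding X_def H_def by simp
  qed
  then have "1 - real (card {m \<in> matchings dv n. X m \<le> \<mu> / 2}) / card (matchings dv n)
      \<le> real (card {m \<in> matchings dv n. pagerank c dv n m v > k}) / card (matchings dv n)"
    using matchings_nonempty[of dv n] ev unfolding S_def
    by (intro card_ratio_ge_complement) auto
  moreover have "real (card {m \<in> matchings dv n. X m \<le> \<mu> / 2}) / card (matchings dv n)
      \<le> 4 / \<mu> + 4 * (real (card H))\<^sup>2 / ((real (card W) - 1) * \<mu>\<^sup>2) + 8 / (real (card W) - 3)"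
    unfolding matchings_eq_perfect_matchings X_def W_def[unfolded S_def, symmetric]
    by (rule perfect_matchings_lower_tail[OF _ _ _ HW _ _ \<mu>_def \<open>\<mu> > 0\<close>])
      (use ev S owner_weight_nonneg owner_weight_le_1 in \<open>auto simp: W_def\<close>)
  moreover have "4 / \<mu> \<le> 4 / \<mu>0"
    using \<open>\<mu>0 > 0\<close> \<open>\<mu>0 \<le> \<mu>\<close> by (intro divide_left_mono) auto
  moreover have "4 / \<mu>0 = 4 * (real S - 1) / (d * (real n - 1))"
    unfolding \<mu>0_def by simp
  moreover have "4 * (real (card H))\<^sup>2 / ((real (card W) - 1) * \<mu>\<^sup>2) \<le> 4 * (real S - 1) / (real n - 1)\<^sup>2"
  proof -
    have "4 * d\<^sup>2 / ((real S - 1) * \<mu>\<^sup>2) \<le> 4 * d\<^sup>2 / ((real S - 1) * \<mu>0\<^sup>2)"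
      using \<open>\<mu>0 > 0\<close> \<open>\<mu>0 \<le> \<mu>\<close> S
      by (intro divide_left_mono mult_left_mono power_mono mult_pos_pos) auto
    moreover have "d \<noteq> 0" "real S - 1 \<noteq> 0" "real n - 1 \<noteq> 0" using d S n by auto
    ultimately show ?thesis unfolding \<mu>0_def W_def H_def d_def
      by (simp add: power_divide power_mult_distrib power2_eq_square)
  qed
  ultimately show ?thesis unfolding W_def d_def by simp
qed

lemma pagerank_gt_at_large_vertex_whp:
  fixes dv :: "nat \<Rightarrow> nat" and n v :: nat and c k \<beta> \<theta> \<epsilon> :: real
  defines "S \<equiv> sum dv {..<n}"
  assumes pos: "\<And>i. i < n \<Longrightarrow> 1 \<le> dv i" and ev: "even S" and n: "n \<ge> 4"
    and v: "v < n" "dv v > \<beta> * k" and c: "0 < c" "c < 1" and k: "k > 0"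
    and ratio: "real S - 1 \<le> \<theta> * (real n - 1)" and \<theta>: "2 * \<theta> \<le> \<beta> * c * (1 - c)"
    and small: "4 * \<theta> / (\<beta> * k) + 4 * \<theta> / (real n - 1) + 8 / (real n - 3) \<le> \<epsilon>"
  shows "1 - \<epsilon> \<le> real (card {m \<in> matchings dv n. pagerank c dv n m v > k}) / card (matchings dv n)"
proof -
  have "S \<ge> n" unfolding S_def using sum_mono[of "{..<n}" "\<lambda>_. 1" dv] pos by simp
  then have "1 * (real n - 1) \<le> \<theta> * (real n - 1)" using ratio by simp
  then have "1 \<le> \<theta>" by (rule mult_right_le_imp_le) (use n in simp)
  then have "\<theta> > 0" by simp
  then have "0 < \<beta> * (c * (1 - c))" using \<theta> by (simp add: mult.assoc)
  moreover have "0 < c * (1 - c)" using c by simp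
  ultimately have "\<beta> > 0" by (rule zero_less_mult_pos2)
  have "2 * k * (real S - 1) \<le> 2 * k * (\<theta> * (real n - 1))"
    using ratio k by simp
  also have "\<dots> \<le> c * (1 - c) * (\<beta> * k) * (real n - 1)"
    using mult_right_mono[OF \<theta>, of "k * (real n - 1)"] k n by (simp add: algebra_simps)
  also have "\<dots> < c * (1 - c) * dv v * (real n - 1)"
    using v(2) c n by (intro mult_strict_right_mono mult_strict_left_mono) auto
  finally have "1 - (4 * (real S - 1) / (dv v * (real n - 1)) + 4 * (real S - 1) / (real n - 1)\<^sup>2
              + 8 / (real S - 3))
      \<le> real (card {m \<in> matchings dv n. pagerank c dv n m v > k}) / card (matchings dv n)"
    using pagerank_gt_at_vertex_whp[OF pos ev[unfolded S_def] _ _ v(1) c] n \<open>S \<ge> n\<close>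
    unfolding S_def by simp
  moreover have "4 * (real S - 1) / (dv v * (real n - 1)) \<le> 4 * \<theta> / (\<beta> * k)"
  proof -
    have "4 * (real S - 1) / (dv v * (real n - 1)) \<le> 4 * (\<theta> * (real n - 1)) / (dv v * (real n - 1))"
      using ratio v n by (intro divide_right_mono) auto
    also have "\<dots> = 4 * \<theta> / dv v" using n by simp
    also have "\<dots> \<le> 4 * \<theta> / (\<beta> * k)"
      using v(2) \<open>\<theta> > 0\<close> mult_pos_pos[OF \<open>\<beta> > 0\<close> k]
      by (intro divide_left_mono) (auto intro!: mult_pos_pos)
    finally show ?thesis .
  qed
  moreover have "4 * (real S - 1) / (real n - 1)\<^sup>2 \<le> 4 * \<theta> / (real n - 1)"
  proof -
    have "4 * (real S - 1) / (real n - 1)\<^sup>2 \<le> 4 * (\<theta> * (real n - 1)) / (real n - 1)\<^sup>2"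
      using ratio by (intro divide_right_mono) auto
    also have "\<dots> = 4 * \<theta> / (real n - 1)" using n by (simp add: power2_eq_square)
    finally show ?thesis .
  qed
  moreover have "8 / (real S - 3) \<le> 8 / (real n - 3)"
    using \<open>S \<ge> n\<close> n by (intro divide_left_mono) auto
  ultimately show ?thesis using small by linarith
qed

lemma expectation_deg_law:
  assumes "n \<ge> 1"
  shows "measure_pmf.expectation (deg_law dv n) real = real (sum dv {..<n}) / n"
proof -
  have "measure_pmf.expectation (deg_law dv n) real
      = measure_pmf.expectation (pmf_of_set {..<n}) (\<lambda>i. real (dv i))"
    unfolding deg_law_def by simp
  also have "\<dots> = (\<Sum>i<n. real (dv i)) / card {..<n}"
    using assms by (intro integral_pmf_of_set) (auto simp: lessThan_empty_iff)
  finally show ?thesis by simp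
qed

lemma prob_root_pr_gt_ge_deg_tail:
  fixes dv :: "nat \<Rightarrow> nat" and n :: nat and c k \<beta> \<theta> \<epsilon> :: real
  defines "S \<equiv> sum dv {..<n}"
  assumes pos: "\<And>i. i < n \<Longrightarrow> 1 \<le> dv i" and ev: "even S" and n: "n \<ge> 4"
    and c: "0 < c" "c < 1" and k: "k > 0"
    and ratio: "real S - 1 \<le> \<theta> * (real n - 1)" and \<theta>: "2 * \<theta> \<le> \<beta> * c * (1 - c)"
    and small: "4 * \<theta> / (\<beta> * k) + 4 * \<theta> / (real n - 1) + 8 / (real n - 3) \<le> \<epsilon>"
  shows "(1 - \<epsilon>) * measure_pmf.prob (deg_law dv n) {j. real j > \<beta> * k} \<le> prob_root_pr_gt c dv n k"
proof -
  have "(1 - \<epsilon>) * measure_pmf.prob (deg_law dv n) {j. real j > \<beta> * k}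
      = (\<Sum>v<n. if dv v > \<beta> * k then 1 - \<epsilon> else 0) / n"
    using prob_deg_law[of n dv "\<lambda>x. x > \<beta> * k"] n by (simp add: sum.If_cases Int_def)
  also have "\<dots> \<le> (\<Sum>v<n. real (card {m \<in> matchings dv n. pagerank c dv n m v > k}) / card (matchings dv n)) / n"
    using pagerank_gt_at_large_vertex_whp[OF pos ev[unfolded S_def] n _ _ c k ratio[unfolded S_def] \<theta> small]
    by (intro divide_right_mono sum_mono) auto
  also have "\<dots> = prob_root_pr_gt c dv n k"
    using prob_root_pr_gt_eq[of dv n c k] ev n unfolding S_def by simp
  finally show ?thesis .
qed

lemma LIMSEQ_pred_ratio:
  fixes s :: "nat \<Rightarrow> real"
  assumes "(\<lambda>n. s n / n) \<longlonglongrightarrow> l"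
  shows "(\<lambda>n. (s n - 1) / (real n - 1)) \<longlonglongrightarrow> l"
proof -
  have "(\<lambda>n. s n / n * (n / (real n - 1)) - 1 / (real n - 1)) \<longlonglongrightarrow> l * 1 - 0"
    by (intro tendsto_intros assms) real_asymp+
  moreover have "\<forall>\<^sub>F n in sequentially. s n / n * (n / (real n - 1)) - 1 / (real n - 1) = (s n - 1) / (real n - 1)"
    using eventually_gt_at_top[of "0::nat"] by eventually_elim (simp add: diff_divide_distrib)
  ultimately show ?thesis by (simp add: tendsto_cong)
qed

theorem eventually_prob_root_pr_gt_ge_deg_tail:
  fixes d :: "nat \<Rightarrow> nat \<Rightarrow> nat" and c \<beta> \<epsilon> \<mu> :: real
  assumes deg_pos: "\<And>n i. i < n \<Longrightarrow> 1 \<le> d n i"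
    and deg_even: "\<And>n. even (\<Sum>i<n. d n i)"
    and conv_mean: "(\<lambda>n. measure_pmf.expectation (deg_law (d n) n) real) \<longlonglongrightarrow> \<mu>"
    and c: "0 < c" "c < 1" and \<beta>: "\<beta> * c * (1 - c) > 2 * \<mu>" and \<epsilon>: "\<epsilon> > 0"
  shows "\<forall>\<^sub>F k in at_top. \<forall>\<^sub>F n in sequentially.
           (1 - \<epsilon>) * measure_pmf.prob (deg_law (d n) n) {j. real j > \<beta> * k} \<le> prob_root_pr_gt c (d n) n k"
proof -
  define S where "S n = sum (d n) {..<n}" for n
  have "\<forall>\<^sub>F n in sequentially. measure_pmf.expectation (deg_law (d n) n) real = real (S n) / n"
    using eventually_ge_at_top[of "1::nat"] by eventually_elim (simp add: expectation_deg_law S_def)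
  from tendsto_cong[OF this] have "(\<lambda>n. real (S n) / n) \<longlonglongrightarrow> \<mu>"
    using conv_mean by simp
  then have ratio: "(\<lambda>n. (real (S n) - 1) / (real n - 1)) \<longlonglongrightarrow> \<mu>"
    by (rule LIMSEQ_pred_ratio)
  have "\<mu> \<ge> 1"
  proof (rule LIMSEQ_le_const[OF \<open>(\<lambda>n. real (S n) / n) \<longlonglongrightarrow> \<mu>\<close>])
    have "S n \<ge> n" for n unfolding S_def using sum_mono[of "{..<n}" "\<lambda>_. 1" "d n"] deg_pos by simp
    then show "\<exists>N. \<forall>n\<ge>N. 1 \<le> real (S n) / real n"
      by (intro exI[of _ 1]) (auto simp: le_divide_eq)
  qed
  define \<theta> where "\<theta> = (\<mu> + \<beta> * c * (1 - c) / 2) / 2"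
  have \<theta>: "\<mu> < \<theta>" "2 * \<theta> \<le> \<beta> * c * (1 - c)" using \<beta> unfolding \<theta>_def by auto
  have "0 < \<beta> * (c * (1 - c))" using \<theta> \<open>\<mu> \<ge> 1\<close> by (simp add: mult.assoc)
  moreover have "0 < c * (1 - c)" using c by simp
  ultimately have "\<beta> > 0" by (rule zero_less_mult_pos2)
  have "(\<lambda>n. 4 * \<theta> / (real n - 1) + 8 / (real n - 3)) \<longlonglongrightarrow> 0"
    by real_asymp
  then have "\<forall>\<^sub>F n in sequentially. 4 * \<theta> / (real n - 1) + 8 / (real n - 3) < \<epsilon> / 2"
    using \<epsilon> by (intro order_tendstoD(2)) auto
  then have large_n: "\<forall>\<^sub>F n in sequentially. real (S n) - 1 \<le> \<theta> * (real n - 1)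
      \<and> 4 * \<theta> / (real n - 1) + 8 / (real n - 3) < \<epsilon> / 2 \<and> n \<ge> 4"
    using order_tendstoD(2)[OF ratio \<theta>(1)] eventually_ge_at_top[of "4::nat"]
    by eventually_elim (simp add: pos_divide_less_eq)
  show ?thesis
    using eventually_ge_at_top[of "max 1 (8 * \<theta> / (\<beta> * \<epsilon>))"]
  proof eventually_elim
    case (elim k)
    then have "k > 0" by simp
    have "8 * \<theta> \<le> k * (\<beta> * \<epsilon>)"
      using elim \<open>\<beta> > 0\<close> \<epsilon> by (simp add: divide_le_eq)
    then have k_large: "4 * \<theta> / (\<beta> * k) \<le> \<epsilon> / 2"
      using \<open>\<beta> > 0\<close> \<open>k > 0\<close> by (simp add: divide_le_eq field_simps)
    show ?case
      using large_n
    proof eventually_elim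
      case (elim n)
      then show ?case
        using prob_root_pr_gt_ge_deg_tail[OF deg_pos deg_even, of n c k \<theta> \<beta> \<epsilon>] k_large c \<theta>(2) \<open>k > 0\<close>
        unfolding S_def by simp
    qed
  qed
qed

section \<open>Root PageRank of the unimodular branching-process tree\<close>

lemma space_ubp_tree [simp]: "space (ubp_tree p) = UNIV"
  unfolding ubp_tree_def space_PiM by (auto simp: PiE_def extensional_def)

lemma prob_space_ubp_tree: "prob_space (ubp_tree p)"
  unfolding ubp_tree_def by (rule prob_space_PiM) (simp add: prob_space_measure_pmf)

lemma measurable_ubp_tree_component [measurable]:
  "(\<lambda>N. N v) \<in> ubp_tree p \<rightarrow>\<^sub>M count_space UNIV"
proof -
  have "(\<lambda>N. N v) \<in> ubp_tree p \<rightarrow>\<^sub>M measure_pmf (if v = [] then p else size_biased p)"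
    unfolding ubp_tree_def by (rule measurable_component_singleton) simp
  then show ?thesis by (simp cong: measurable_cong_sets)
qed

lemma sets_ubp_tree_component [measurable]: "{N. P (N v)} \<in> sets (ubp_tree p)"
  using measurable_sets[OF measurable_ubp_tree_component[of v p], of "{x. P x}"] by (simp add: vimage_def)

lemma borel_measurable_tree_col_sum: "(\<lambda>N. tree_col_sum N s v) \<in> borel_measurable (ubp_tree p)"
proof (induction s arbitrary: v)
  case (Suc s)
  have "(\<lambda>N. tree_col_sum N s w / real (tree_deg N w)) \<in> borel_measurable (ubp_tree p)" for w
    using Suc.IH[of w] unfolding tree_deg_def by measurable
  then have "(\<lambda>N. \<Sum>i<j. tree_col_sum N s (v @ [i]) / real (tree_deg N (v @ [i])))
      \<in> borel_measurable (ubp_tree p)" for j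
    by (intro borel_measurable_sum) auto
  from measurable_compose_countable[OF this measurable_ubp_tree_component] Suc.IH
  show ?case unfolding tree_col_sum.simps tree_deg_def by measurable
qed simp

lemma borel_measurable_tree_root_pr: "(\<lambda>N. tree_root_pr c N) \<in> borel_measurable (ubp_tree p)"
  unfolding tree_root_pr_def using borel_measurable_tree_col_sum
  by (intro borel_measurable_suminf_order) measurable

lemma measure_ubp_tree_root: "measure (ubp_tree p) {N. N [] \<in> A} = measure_pmf.prob p A"
proof -
  let ?M = "\<lambda>v. measure_pmf (if v = [] then p else size_biased p)"
  have "prod_emb UNIV ?M {[]} (Pi\<^sub>E {[]} (\<lambda>_. A)) = {N. N [] \<in> A}"
    by (auto simp: prod_emb_def PiE_def extensional_def)
  moreover have "emeasure (Pi\<^sub>M UNIV ?M) (prod_emb UNIV ?M {[]} (Pi\<^sub>E {[]} (\<lambda>_. A))) = emeasure p A"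
    by (subst emeasure_PiM_emb) (auto simp: prob_space_measure_pmf)
  ultimately have "emeasure (Pi\<^sub>M UNIV ?M) {N. N [] \<in> A} = emeasure p A" by metis
  then show ?thesis unfolding measure_def ubp_tree_def by (rule arg_cong)
qed

lemma measure_ubp_tree_root_vertex:
  assumes "w \<noteq> []"
  shows "measure (ubp_tree p) {N. N [] \<in> A \<and> N w \<in> B}
       = measure_pmf.prob p A * measure_pmf.prob (size_biased p) B"
proof -
  let ?M = "\<lambda>v. measure_pmf (if v = [] then p else size_biased p)"
  define X where "X v = (if v = [] then A else B)" for v :: "nat list"
  have "{N. N [] \<in> A \<and> N w \<in> B} = prod_emb UNIV ?M {[], w} (Pi\<^sub>E {[], w} X)"
    using assms by (auto simp: prod_emb_def X_def PiE_def extensional_def)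
  then have "emeasure (Pi\<^sub>M UNIV ?M) {N. N [] \<in> A \<and> N w \<in> B}
      = emeasure p A * emeasure (size_biased p) B"
    using assms by (simp, subst emeasure_PiM_emb) (auto simp: prob_space_measure_pmf X_def)
  then show ?thesis
    unfolding measure_def ubp_tree_def by (simp add: enn2real_mult)
qed

lemma tree_col_sum_bounds:
  "0 \<le> tree_col_sum N s v \<and> tree_col_sum N s v \<le> max 1 (real (tree_deg N v))"
proof (induction s arbitrary: v)
  case (Suc s)
  have step: "0 \<le> tree_col_sum N s w / real (tree_deg N w) \<and> tree_col_sum N s w / real (tree_deg N w) \<le> 1"
    for w
    using Suc.IH[of w] by (cases "tree_deg N w = 0") (auto simp: divide_le_eq_1)
  have "(\<Sum>i<N v. tree_col_sum N s (v @ [i]) / real (tree_deg N (v @ [i]))) \<le> (\<Sum>i<N v. 1)"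
    using step by (intro sum_mono) auto
  moreover have "(if v = [] then 0 else tree_col_sum N s (butlast v) / real (tree_deg N (butlast v)))
      \<le> (if v = [] then 0 else 1)"
    using step by auto
  ultimately have "tree_col_sum N (Suc s) v \<le> (\<Sum>i<N v. 1) + (if v = [] then 0 else 1)"
    unfolding tree_col_sum.simps by (rule add_mono)
  also have "\<dots> = real (tree_deg N v)"
    by (simp add: tree_deg_def)
  finally have "tree_col_sum N (Suc s) v \<le> max 1 (real (tree_deg N v))"
    by (rule max.coboundedI2)
  moreover have "0 \<le> tree_col_sum N (Suc s) v"
    using step by (auto intro!: sum_nonneg add_nonneg_nonneg)
  ultimately show ?case by simp
qed simp

lemma tree_root_pr_le:
  assumes c: "0 < c" "c < 1"
  shows "tree_root_pr c N \<le> max 1 (real (N []))"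
proof -
  define B where "B = max 1 (real (N []))"
  have "tree_root_pr c N \<le> (\<Sum>s. ennreal ((1 - c) * c ^ s * B))"
    unfolding tree_root_pr_def
  proof (intro suminf_le ennreal_leI mult_left_mono)
    show "tree_col_sum N s [] \<le> B" for s
      using tree_col_sum_bounds[of N s "[]"] unfolding B_def tree_deg_def by simp
  qed (use c in auto)
  also have "\<dots> = ennreal (\<Sum>s. (1 - c) * c ^ s * B)"
    by (rule suminf_ennreal2)
      (use c B_def in \<open>auto intro!: summable_mult2 summable_mult summable_geometric\<close>)
  also have "(\<Sum>s. (1 - c) * c ^ s * B) = B"
    using c by (simp add: suminf_mult suminf_mult2[symmetric] suminf_geometric summable_geometric)
  finally show ?thesis unfolding B_def .
qed

lemma tree_root_pr_ge_children:
  "ennreal ((1 - c) * c * (\<Sum>i<N []. 1 / real (N [i] + 1))) \<le> tree_root_pr c N"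
proof -
  let ?f = "\<lambda>s. ennreal ((1 - c) * c ^ s * tree_col_sum N s [])"
  have "?f 1 \<le> (\<Sum>s<2. ?f s)" by (simp add: numeral_2_eq_2)
  also have "\<dots> \<le> tree_root_pr c N" unfolding tree_root_pr_def by (rule sum_le_suminf) auto
  finally show ?thesis by (simp add: tree_deg_def)
qed

lemma real_card_filter_eq_sum: "finite A \<Longrightarrow> real (card {x \<in> A. P x}) = (\<Sum>x\<in>A. if P x then 1 else 0)"
  by (simp add: sum.If_cases Int_def)

lemma real_card_lessThan_filter:
  "real (card {i. i < (m::nat) \<and> P i}) = (\<Sum>i<m. if P i then 1 else 0)"
  using real_card_filter_eq_sum[of "{..<m}" P, OF finite_lessThan] by simp

lemma sets_ubp_tree_small_children:
  "{N. N [] = m \<and> 2 * card {i. i < m \<and> t < N [i]} < m} \<in> sets (ubp_tree p)"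
proof -
  define F where "F N = real (card {i. i < m \<and> t < N [i]})" for N
  have "F \<in> borel_measurable (ubp_tree p)"
    unfolding F_def real_card_lessThan_filter by measurable
  then have "{N \<in> space (ubp_tree p). 2 * F N < m} \<in> sets (ubp_tree p)"
    by measurable
  moreover have "{N. N [] = m \<and> 2 * card {i. i < m \<and> t < N [i]} < m}
      = {N. N [] = m} \<inter> {N \<in> space (ubp_tree p). 2 * F N < m}"
    unfolding F_def by (auto simp del: of_nat_less_iff)
  ultimately show ?thesis by simp
qed

text \<open>By Markov's inequality, at most half of the \<open>m\<close> children of the root have more than \<open>t\<close>
  children of their own, with probability at least \<open>1 / 2\<close> given \<open>N [] = m\<close>.\<close>

lemma prob_many_small_children:
  fixes p :: "nat pmf" and t m :: nat
  assumes q: "measure_pmf.prob (size_biased p) {j. t < j} \<le> 1 / 4" and m: "m \<ge> 1"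
  shows "pmf p m / 2 \<le> measure (ubp_tree p) {N. N [] = m \<and> 2 * card {i. i < m \<and> t < N [i]} < m}"
proof -
  interpret P: prob_space "ubp_tree p" by (rule prob_space_ubp_tree)
  define C where "C i = {N. N [] = m \<and> t < N [i]}" for i :: nat
  define u where "u N = (\<Sum>i<m. indicator (C i) N :: real)" for N
  define G where "G = {N. N [] = m \<and> 2 * card {i. i < m \<and> t < N [i]} < m}"
  define B where "B = {N. N [] = m \<and> m \<le> 2 * card {i. i < m \<and> t < N [i]}}"
  have C: "C i \<in> sets (ubp_tree p)" "measure (ubp_tree p) (C i)
      = pmf p m * measure_pmf.prob (size_biased p) {j. t < j}" for i
    using measure_ubp_tree_root_vertex[of "[i]" p "{m}" "{j. t < j}"]
    unfolding C_def Collect_conj_eq by (auto simp: measure_pmf_single intro: sets.Int)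
  have "integrable (ubp_tree p) u"
    unfolding u_def using C by (auto simp: P.emeasure_eq_measure)
  then have "measure (ubp_tree p) {N \<in> space (ubp_tree p). u N \<ge> m / 2} \<le> (\<integral>N. u N \<partial>ubp_tree p) / (m / 2)"
    by (rule integral_Markov_inequality_measure[where A = "space (ubp_tree p)"])
      (use m in \<open>auto simp: u_def simp del: space_ubp_tree intro!: sum_nonneg\<close>)
  also have "(\<integral>N. u N \<partial>ubp_tree p) = m * (pmf p m * measure_pmf.prob (size_biased p) {j. t < j})"
    unfolding u_def using C by (simp add: P.emeasure_eq_measure)
  also have "\<dots> / (m / 2) \<le> pmf p m / 2"
    using q m by (simp add: field_simps mult_left_le)
  finally have "measure (ubp_tree p) {N \<in> space (ubp_tree p). u N \<ge> m / 2} \<le> pmf p m / 2" .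
  moreover have "B \<subseteq> {N \<in> space (ubp_tree p). u N \<ge> m / 2}"
  proof
    fix N assume N: "N \<in> B"
    then have "u N = (\<Sum>i<m. if t < N [i] then 1 else 0)"
      unfolding u_def C_def B_def by (intro sum.cong) (auto simp: indicator_def)
    then show "N \<in> {N \<in> space (ubp_tree p). u N \<ge> m / 2}"
      using N unfolding B_def real_card_lessThan_filter[symmetric] by simp
  qed
  moreover have "{N \<in> space (ubp_tree p). u N \<ge> m / 2} \<in> sets (ubp_tree p)"
    unfolding u_def C_def by measurable
  ultimately have "measure (ubp_tree p) B \<le> pmf p m / 2"
    by (meson P.finite_measure_mono order_trans)
  have G_sets: "G \<in> sets (ubp_tree p)" unfolding G_def by (rule sets_ubp_tree_small_children)
  moreover have "B = {N. N [] = m} - G" unfolding G_def B_def by auto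
  ultimately have "B \<in> sets (ubp_tree p)"
    using sets.Diff[OF sets_ubp_tree_component[of "\<lambda>x. x = m" "[]" p]] by simp
  moreover have "{N. N [] = m} = G \<union> B" "G \<inter> B = {}" unfolding G_def B_def by auto
  ultimately have "pmf p m = measure (ubp_tree p) G + measure (ubp_tree p) B"
    using measure_ubp_tree_root[of p "{m}"] G_sets by (simp add: P.finite_measure_Union measure_pmf_single)
  then show ?thesis using \<open>measure (ubp_tree p) B \<le> pmf p m / 2\<close> unfolding G_def by simp
qed

lemma tree_root_pr_gt_of_small_children:
  assumes c: "0 < c" "c < 1" and k: "k > 0"
    and N: "N [] = m" "2 * card {i. i < m \<and> t < N [i]} < m"
    and m: "real m > 2 * (real t + 1) / ((1 - c) * c) * k"
  shows "tree_root_pr c N > k"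
proof -
  define Good where "Good = {i. i < m \<and> \<not> t < N [i]}"
  have "real (card {i. i < m \<and> t < N [i]}) + real (card Good)
      = (\<Sum>i<m. (if t < N [i] then 1 else 0) + (if \<not> t < N [i] then 1 else 0))"
    unfolding Good_def real_card_lessThan_filter sum.distrib by simp
  also have "\<dots> = (\<Sum>i<m. 1)" by (intro sum.cong) auto
  finally have "real (card {i. i < m \<and> t < N [i]}) + real (card Good) = real m" by simp
  then have "real m / 2 < real (card Good)" using N(2) by linarith
  have cc: "(1 - c) * c > 0" using c by simp
  have "real (card Good) / (real t + 1) = (\<Sum>i\<in>Good. 1 / (real t + 1))" by simp
  also have "\<dots> \<le> (\<Sum>i\<in>Good. 1 / real (N [i] + 1))"
    by (intro sum_mono divide_left_mono) (auto simp: Good_def)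
  also have "\<dots> \<le> (\<Sum>i<m. 1 / real (N [i] + 1))"
    by (intro sum_mono2) (auto simp: Good_def)
  finally have children: "real (card Good) / (real t + 1) \<le> (\<Sum>i<N []. 1 / real (N [i] + 1))"
    using N(1) by simp
  have "k < (1 - c) * c * (real m / 2 / (real t + 1))"
    using m cc by (simp add: field_simps)
  also have "\<dots> < (1 - c) * c * (real (card Good) / (real t + 1))"
    using \<open>real m / 2 < real (card Good)\<close> cc
    by (intro mult_strict_left_mono divide_strict_right_mono) auto
  also have "\<dots> \<le> (1 - c) * c * (\<Sum>i<N []. 1 / real (N [i] + 1))"
    using children cc by (intro mult_left_mono) auto
  finally have "ennreal k < ennreal ((1 - c) * c * (\<Sum>i<N []. 1 / real (N [i] + 1)))"
    using k by (subst ennreal_less_iff) auto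
  also have "\<dots> \<le> tree_root_pr c N"
    by (rule tree_root_pr_ge_children)
  finally show ?thesis .
qed

lemma ex_tail_prob_le_quarter:
  fixes q :: "nat pmf"
  shows "\<exists>t. measure_pmf.prob q {j. t < j} \<le> 1 / 4"
proof -
  have "(\<lambda>t. measure_pmf.prob q {..t}) \<longlonglongrightarrow> measure_pmf.prob q (\<Union>t. {..t})"
    by (rule measure_pmf.finite_Lim_measure_incseq) (auto simp: incseq_def)
  moreover have "(\<Union>t. {..t}) = (UNIV :: nat set)" by auto
  ultimately have "(\<lambda>t. measure_pmf.prob q {..t}) \<longlonglongrightarrow> 1" by simp
  then have "\<forall>\<^sub>F t in sequentially. measure_pmf.prob q {..t} > 3 / 4"
    by (rule order_tendstoD(1)) simp
  then obtain t where t: "measure_pmf.prob q {..t} > 3 / 4"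
    by (auto simp: eventually_sequentially)
  have "{j. t < j} = UNIV - {..t}" by auto
  then have "measure_pmf.prob q {j. t < j} = 1 - measure_pmf.prob q {..t}"
    using measure_pmf.prob_compl[of "{..t}" q] by simp
  then show ?thesis using t by (intro exI[of _ t]) simp
qed

lemma prob_limit_pr_gt_ge_deg_tail_scaled:
  assumes c: "0 < c" "c < 1" and k: "k > 0"
    and t: "measure_pmf.prob (size_biased p) {j. t < j} \<le> 1 / 4"
  defines "\<gamma> \<equiv> 2 * (real t + 1) / ((1 - c) * c)"
  shows "measure_pmf.prob p {j. real j > \<gamma> * k} / 2 \<le> prob_limit_pr_gt c p k"
proof -
  interpret P: prob_space "ubp_tree p" by (rule prob_space_ubp_tree)
  define S where "S = {j. real j > \<gamma> * k}"
  define G where "G m = (if m \<in> S then {N. N [] = m \<and> 2 * card {i. i < m \<and> t < N [i]} < m} else {})"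
    for m
  have "range G \<subseteq> sets (ubp_tree p)"
    unfolding G_def using sets_ubp_tree_small_children by auto
  moreover have "disjoint_family G" unfolding G_def disjoint_family_on_def by auto
  ultimately have sums_G: "(\<lambda>m. measure (ubp_tree p) (G m)) sums measure (ubp_tree p) (\<Union>m. G m)"
    by (rule P.finite_measure_UNION)
  have "(\<lambda>m. measure_pmf.prob p ({m} \<inter> S)) sums measure_pmf.prob p (\<Union>m. {m} \<inter> S)"
    by (rule measure_pmf.finite_measure_UNION) (auto simp: disjoint_family_on_def)
  moreover have "(\<Union>m. {m} \<inter> S) = S" by auto
  ultimately have sums_S: "(\<lambda>m. measure_pmf.prob p ({m} \<inter> S) / 2) sums (measure_pmf.prob p S / 2)"
    by (simp add: sums_divide)
  have "\<gamma> > 0" unfolding \<gamma>_def using c by (intro divide_pos_pos mult_pos_pos) auto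
  have "measure_pmf.prob p ({m} \<inter> S) / 2 \<le> measure (ubp_tree p) (G m)" for m
  proof (cases "m \<in> S")
    case True
    then have "real m > 0" unfolding S_def using \<open>\<gamma> > 0\<close> k
      by (metis mem_Collect_eq mult_pos_pos order.strict_trans)
    then have "m \<ge> 1" by simp
    then show ?thesis using prob_many_small_children[OF t] True unfolding G_def
      by (simp add: measure_pmf_single)
  qed (simp add: G_def)
  then have "measure_pmf.prob p S / 2 \<le> measure (ubp_tree p) (\<Union>m. G m)"
    using sums_S sums_G by (rule sums_le)
  also have "\<dots> \<le> prob_limit_pr_gt c p k"
    unfolding prob_limit_pr_gt_def
  proof (rule P.finite_measure_mono)
    show "(\<Union>m. G m) \<subseteq> {N \<in> space (ubp_tree p). ennreal k < tree_root_pr c N}"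
    proof
      fix N assume "N \<in> (\<Union>m. G m)"
      then obtain m where m: "m \<in> S" "N [] = m" "2 * card {i. i < m \<and> t < N [i]} < m"
        unfolding G_def by (auto split: if_splits)
      have "ennreal k < tree_root_pr c N"
        by (rule tree_root_pr_gt_of_small_children[OF c k m(2,3)]) (use m(1) in \<open>simp add: S_def \<gamma>_def\<close>)
      then show "N \<in> {N \<in> space (ubp_tree p). ennreal k < tree_root_pr c N}" by simp
    qed
    show "{N \<in> space (ubp_tree p). ennreal k < tree_root_pr c N} \<in> sets (ubp_tree p)"
      using borel_measurable_tree_root_pr[of c p] by measurable
  qed
  finally show ?thesis unfolding S_def .
qed

lemma prob_limit_pr_gt_ge_deg_tail:
  assumes c: "0 < c" "c < 1"
  obtains \<gamma> where "\<gamma> > 0"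
    and "\<And>k. k > 0 \<Longrightarrow> measure_pmf.prob p {j. real j > \<gamma> * k} / 2 \<le> prob_limit_pr_gt c p k"
proof -
  obtain t where t: "measure_pmf.prob (size_biased p) {j. t < j} \<le> 1 / 4"
    using ex_tail_prob_le_quarter by blast
  have "2 * (real t + 1) / ((1 - c) * c) > 0" using c by (intro divide_pos_pos mult_pos_pos) auto
  then show ?thesis using that prob_limit_pr_gt_ge_deg_tail_scaled[OF c _ t] by blast
qed

lemma prob_limit_pr_gt_le_deg_tail:
  assumes c: "0 < c" "c < 1" and p0: "pmf p 0 = 0" and k: "k > 0"
  shows "prob_limit_pr_gt c p k \<le> measure_pmf.prob p {j. real j > k}"
proof (cases "k \<ge> 1")
  case True
  interpret P: prob_space "ubp_tree p" by (rule prob_space_ubp_tree)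
  have "{N \<in> space (ubp_tree p). ennreal k < tree_root_pr c N} \<subseteq> {N. N [] \<in> {j. real j > k}}"
  proof safe
    fix N assume "ennreal k < tree_root_pr c N"
    also have "\<dots> \<le> ennreal (max 1 (real (N [])))" by (rule tree_root_pr_le[OF c])
    finally show "real (N []) > k" using k True by (subst (asm) ennreal_less_iff) auto
  qed
  then have "prob_limit_pr_gt c p k \<le> measure (ubp_tree p) {N. N [] \<in> {j. real j > k}}"
    unfolding prob_limit_pr_gt_def by (rule P.finite_measure_mono) simp
  then show ?thesis using measure_ubp_tree_root[of p "{j. real j > k}"] by simp
next
  case False
  have "measure_pmf.prob p {j. real j > k} \<ge> measure_pmf.prob p (UNIV - {0})"
    using False by (intro measure_pmf.finite_measure_mono) auto
  also have "measure_pmf.prob p (UNIV - {0}) = 1"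
    using measure_pmf.prob_compl[of "{0}" p] p0 by (simp add: measure_pmf_single)
  finally show ?thesis unfolding prob_limit_pr_gt_def
    using prob_space.prob_le_1[OF prob_space_ubp_tree] by (smt (verit))
qed

lemma regularly_varying_tail_ratio:
  fixes L :: "real \<Rightarrow> real" and F :: "real \<Rightarrow> real"
  assumes sv: "slowly_varying L" and tail: "\<And>x. x > 0 \<Longrightarrow> F x = L x * x powr e" and \<gamma>: "\<gamma> > 0"
  obtains K where "K > 0" "\<And>x. x \<ge> K \<Longrightarrow> \<gamma> powr e / 2 * F x \<le> F (\<gamma> * x)"
proof -
  have "((\<lambda>x. L (\<gamma> * x) / L x) \<longlongrightarrow> 1) at_top" using sv \<gamma> unfolding slowly_varying_def by auto
  then have "\<forall>\<^sub>F x in at_top. L (\<gamma> * x) / L x > 1 / 2" by (rule order_tendstoD(1)) simp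
  then obtain K0 where K0: "\<And>x. x \<ge> K0 \<Longrightarrow> L (\<gamma> * x) / L x > 1 / 2"
    by (auto simp: eventually_at_top_linorder)
  have "\<gamma> powr e / 2 * F x \<le> F (\<gamma> * x)" if x: "x \<ge> max K0 1" for x
  proof -
    have "L x > 0" using sv x unfolding slowly_varying_def by auto
    then have "L x / 2 \<le> L (\<gamma> * x)" using K0[of x] x by (simp add: field_simps)
    then have "L x / 2 * (\<gamma> powr e * x powr e) \<le> L (\<gamma> * x) * (\<gamma> powr e * x powr e)"
      by (rule mult_right_mono) simp
    then show ?thesis using tail[of x] tail[of "\<gamma> * x"] x \<gamma> by (simp add: powr_mult mult_ac)
  qed
  then show ?thesis using that[of "max K0 1"] by simp
qed

theorem prob_limit_pr_gt_regularly_varying: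
  fixes L :: "real \<Rightarrow> real" and c e :: real and p :: "nat pmf"
  assumes c: "0 < c" "c < 1" and p0: "pmf p 0 = 0" and sv: "slowly_varying L"
    and tail: "\<forall>x>0. measure_pmf.prob p {j. real j > x} = L x * x powr e"
  shows "\<exists>a. 0 < a \<and> a \<le> 1 \<and>
           (\<forall>k>0. a * L k * k powr e \<le> prob_limit_pr_gt c p k \<and> prob_limit_pr_gt c p k \<le> L k * k powr e)"
proof -
  define F where "F x = measure_pmf.prob p {j. real j > x}" for x
  obtain \<gamma> where "\<gamma> > 0" and low: "\<And>k. k > 0 \<Longrightarrow> F (\<gamma> * k) / 2 \<le> prob_limit_pr_gt c p k"
    using prob_limit_pr_gt_ge_deg_tail[OF c, of p] unfolding F_def by blast
  obtain K where "K > 0" and ratio: "\<And>x. x \<ge> K \<Longrightarrow> \<gamma> powr e / 2 * F x \<le> F (\<gamma> * x)"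
    using regularly_varying_tail_ratio[OF sv, of F e \<gamma>] tail \<open>\<gamma> > 0\<close> unfolding F_def by blast
  have "F (\<gamma> * K) > 0"
    using tail sv \<open>\<gamma> > 0\<close> \<open>K > 0\<close> unfolding F_def slowly_varying_def by simp
  define a where "a = min 1 (min (\<gamma> powr e / 4) (F (\<gamma> * K) / 2))"
  have a: "0 < a" "a \<le> 1" "a \<le> \<gamma> powr e / 4" "a \<le> F (\<gamma> * K) / 2"
    using \<open>\<gamma> > 0\<close> \<open>F (\<gamma> * K) > 0\<close> unfolding a_def by auto
  have "a * F k \<le> prob_limit_pr_gt c p k" if k: "k > 0" for k
  proof (cases "k \<ge> K")
    case True
    have "a * F k \<le> \<gamma> powr e / 4 * F k"
      using a by (intro mult_right_mono) (auto simp: F_def)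
    also have "\<dots> \<le> F (\<gamma> * k) / 2" using ratio[OF True] by (simp add: mult.commute)
    finally show ?thesis using low[OF k] by simp
  next
    case False
    have "a * F k \<le> a" using a by (simp add: F_def mult_left_le)
    also have "\<dots> \<le> F (\<gamma> * K) / 2" by (rule a(4))
    also have "F (\<gamma> * K) \<le> F (\<gamma> * k)"
    proof -
      have "\<gamma> * k \<le> \<gamma> * K" using False \<open>\<gamma> > 0\<close> by simp
      then show ?thesis unfolding F_def by (intro measure_pmf.finite_measure_mono) auto
    qed
    finally show ?thesis using low[OF k] by simp
  qed
  moreover have "prob_limit_pr_gt c p k \<le> F k" if "k > 0" for k
    unfolding F_def by (rule prob_limit_pr_gt_le_deg_tail[OF c p0 that])
  ultimately show ?thesis
    using a(1,2) tail unfolding F_def by (metis mult.assoc)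
qed

text \<open>All degrees are positive, so the limit law has no atom at 0: its distribution function
  is constant on \<open>(0, 1)\<close>, hence continuous at \<open>1 / 2\<close>, where all the finite-\<open>n\<close> ones vanish.\<close>

lemma pmf_zero_of_weak_conv_deg_law:
  fixes d :: "nat \<Rightarrow> nat \<Rightarrow> nat"
  assumes deg_pos: "\<And>n i. i < n \<Longrightarrow> 1 \<le> d n i"
    and conv_dist: "weak_conv_m (\<lambda>n. measure_pmf (map_pmf real (deg_law (d n) n)))
                                (measure_pmf (map_pmf real pD))"
  shows "pmf pD 0 = 0"
proof -
  let ?F = "\<lambda>n. cdf (measure_pmf (map_pmf real (deg_law (d n) n)))"
  let ?G = "cdf (measure_pmf (map_pmf real pD))"
  have G: "?G y = pmf pD 0" if "0 < y" "y < 1" for y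
  proof -
    have "real -` {..y} = {0}" using that by (auto simp: less_le_not_le)
    then show ?thesis unfolding cdf_def2 by (simp add: measure_pmf_single)
  qed
  have "\<forall>\<^sub>F y in at (1 / 2). ?G y = ?G (1 / 2)"
    unfolding eventually_at
  proof (intro exI[of _ "1 / 2"] conjI ballI impI allI)
    fix y :: real assume "y \<noteq> 1 / 2 \<and> dist y (1 / 2) < 1 / 2"
    then have "0 < y" "y < 1" by (auto simp: dist_real_def abs_if split: if_splits)
    then show "?G y = ?G (1 / 2)" using G by simp
  qed simp
  then have "isCont ?G (1 / 2)" unfolding isCont_def by (rule tendsto_eventually)
  then have "(\<lambda>n. ?F n (1 / 2)) \<longlonglongrightarrow> ?G (1 / 2)"
    using conv_dist unfolding weak_conv_m_def weak_conv_def by blast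
  moreover have "\<forall>\<^sub>F n in sequentially. ?F n (1 / 2) = 0"
    using eventually_ge_at_top[of "1::nat"]
  proof eventually_elim
    case (elim n)
    have "{i \<in> {..<n}. real (d n i) \<le> 1 / 2} = {}"
      using deg_pos[of _ n] by force
    then show ?case
      using prob_deg_law[OF elim, of "d n" "\<lambda>x. x \<le> 1 / 2"] unfolding cdf_def2 by (simp add: vimage_def)
  qed
  then have "(\<lambda>n. ?F n (1 / 2)) \<longlonglongrightarrow> 0" by (rule tendsto_eventually)
  ultimately have "?G (1 / 2) = 0" by (rule LIMSEQ_unique)
  then show ?thesis using G[of "1 / 2"] by simp
qed

theorem mainTheorem6:
  fixes d :: "nat \<Rightarrow> nat \<Rightarrow> nat" and pD :: "nat pmf" and c :: real
  assumes deg_pos: "\<And>n i. i < n \<Longrightarrow> 1 \<le> d n i"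
    and deg_even: "\<And>n. even (\<Sum>i<n. d n i)"
    and conv_dist: "weak_conv_m (\<lambda>n. measure_pmf (map_pmf real (deg_law (d n) n)))
                                (measure_pmf (map_pmf real pD))"
    and D_integrable: "integrable (measure_pmf pD) real"
    and conv_mean: "(\<lambda>n. measure_pmf.expectation (deg_law (d n) n) real)
                      \<longlonglongrightarrow> measure_pmf.expectation pD real"
    and c: "0 < c" "c < 1"
  shows "(\<forall>n\<ge>1. \<forall>k::real. prob_root_pr_gt c (d n) n k
                 \<le> measure_pmf.prob (deg_law (d n) n) {j. real j > k})
     \<and> (\<forall>\<beta>::real. \<beta> > 4 * measure_pmf.expectation pD real / (c * (1 - c)) \<longrightarrow>
          (\<forall>\<epsilon>>0. \<forall>\<^sub>F k in at_top. \<forall>\<^sub>F n in sequentially.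
             prob_root_pr_gt c (d n) n k
               \<ge> (1 - \<epsilon>) * measure_pmf.prob (deg_law (d n) n) {j. real j > \<beta> * k}))
     \<and> (\<forall>(\<tau>::real) (L::real \<Rightarrow> real). \<tau> > 1 \<and> slowly_varying L \<and>
          (\<forall>x>0. measure_pmf.prob pD {j. real j > x} = L x * x powr (-(\<tau> - 1)))
          \<longrightarrow> (\<exists>a. 0 < a \<and> a \<le> 1 \<and>
                (\<forall>k>0. a * L k * k powr (-(\<tau> - 1)) \<le> prob_limit_pr_gt c pD k
                       \<and> prob_limit_pr_gt c pD k \<le> L k * k powr (-(\<tau> - 1)))))"
proof (intro conjI allI impI)
  fix n :: nat and k :: real
  assume "n \<ge> 1"
  with deg_pos deg_even c show "prob_root_pr_gt c (d n) n k \<le> measure_pmf.prob (deg_law (d n) n) {j. real j > k}"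
    by (intro prob_root_pr_gt_le_deg_tail) auto
next
  fix \<beta> \<epsilon> :: real
  assume \<beta>: "\<beta> > 4 * measure_pmf.expectation pD real / (c * (1 - c))" and "\<epsilon> > 0"
  have "\<beta> * c * (1 - c) > 4 * measure_pmf.expectation pD real"
    using \<beta> c by (simp add: field_simps)
  moreover have "measure_pmf.expectation pD real \<ge> 0" by simp
  ultimately have "\<beta> * c * (1 - c) > 2 * measure_pmf.expectation pD real" by linarith
  then show "\<forall>\<^sub>F k in at_top. \<forall>\<^sub>F n in sequentially.
      prob_root_pr_gt c (d n) n k \<ge> (1 - \<epsilon>) * measure_pmf.prob (deg_law (d n) n) {j. real j > \<beta> * k}"
    using eventually_prob_root_pr_gt_ge_deg_tail[OF deg_pos deg_even conv_mean c _ \<open>\<epsilon> > 0\<close>] by simp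
next
  fix \<tau> :: real and L :: "real \<Rightarrow> real"
  assume "\<tau> > 1 \<and> slowly_varying L \<and>
    (\<forall>x>0. measure_pmf.prob pD {j. real j > x} = L x * x powr (-(\<tau> - 1)))"
  then show "\<exists>a. 0 < a \<and> a \<le> 1 \<and>
      (\<forall>k>0. a * L k * k powr (-(\<tau> - 1)) \<le> prob_limit_pr_gt c pD k
             \<and> prob_limit_pr_gt c pD k \<le> L k * k powr (-(\<tau> - 1)))"
    using prob_limit_pr_gt_regularly_varying[OF c pmf_zero_of_weak_conv_deg_law[OF deg_pos conv_dist]]
    by simp
qed

end
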